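(* For all probability measures $\mu_1,\mu_2$ on $E$ and all $s,t,T\in I$ with $0\le s\le s+1\le t\le T$, \[ \left\|\mu_1 K_{s,t}^T-\mu_2 K_{s,t}^T\right\|_{TV}\le \prod_{k=0}^{\lfloor t-s\rfloor-1}\bigl(1-d_{t-k}\bigr)\,\|\mu_1-\mu_2\|_{TV} \] and \[ \left\|\Phi_{s,t}(\mu_1)-\Phi_{s,t}(\mu_2)\right\|_{TV}\le 2\prod_{k=0}^{\lfloor t-s\rfloor-1}\bigl(1-d_{t-k}\bigr). \]
   Context: Let $I=[0,+\infty)$ or $I=\mathbb{N}$. Let $(X_t)_{t\in I}$ be a (possibly time-inhomogeneous) Markov process with values in a measurable space $(E,\mathcal E)$, defined on $(\Omega,(\mathcal F_{s,t})_{0\le s\le t\in I},\mathbb P)$, with $X_t$ being $\mathcal F_{s,r}$-measurable for all $s\le t\le r$. For $s\in I$ and a probability measure $\mu$ on $E$, $\mathbb P_{s,\mu}$ (resp. $\mathbb P_{s,x}$ when $\mu=\delta_x$) denotes the law of the process $(X_t)_{t\ge s}$ started at time $s$ with distribution $\mu$, and $\mathbb E_{s,\mu}$ the corresponding expectation. Let $\{Z_{s,t}: s\le t,\ s,t\in I\}$ be nonnegative random variables with $Z_{s,t}$ $\mathcal F_{s,t}$-measurable, multiplicative ($Z_{s,r}Z_{r,t}=Z_{s,t}$ for $s\le r\le t$), and such that $\mathbb E_{s,x}(Z_{s,t})>0$ and $\sup_{y\in E}\mathbb E_{s,y}(Z_{s,t})<\infty$ for all $s\le t$ in $I$ and $x\in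 E$. For a probability measure $\mu$ and $s\le t$, $\Phi_{s,t}(\mu)$ is the probability measure with $\Phi_{s,t}(\mu)(f)=\mathbb E_{s,\mu}(f(X_t)Z_{s,t})/\mathbb E_{s,\mu}(Z_{s,t})$ for bounded measurable $f$. For $s\in I$, $s\ge 1$, and $x_1,x_2\in E$, let $\nu_{s,x_1,x_2}=\min_{i=1,2}\Phi_{s-1,s}(\delta_{x_i})$ (the largest measure smaller than both measures) and \[ d_s=\inf_{t\ge 0,\ x_1,x_2\in E}\frac{\mathbb E_{s,\nu_{s,x_1,x_2}}(Z_{s,s+t})}{\sup_{x\in E}\mathbb E_{s,x}(Z_{s,s+t})},\] where $\mathbb E_{s,\nu}(\cdot)=\int\mathbb E_{s,x}(\cdot)\nu(dx)$ for a nonnegative measure $\nu$. For $0\le s\le t\le T$ and bounded measurable $f$, $K^T_{s,t}f(x)=\mathbb E_{s,x}(f(X_t)Z_{s,T})/\mathbb E_{s,x}(Z_{s,T})$ and $\mu K^T_{s,t}f=\int_E K^T_{s,t}f(x)\mu(dx)$. For a finite signed measure $\mu$, $\|\mu\|_{TV}=\sup_{A\in\mathcal E}\mu(A)-\inf_{A\in\mathcal E}\mu(A)$. *)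

theory Defs
  imports "HOL-Probability.Probability"
begin

text \<open>Time is real-valued; the time set I is either [0,+oo) or the natural numbers
 (embedded into the reals).  The state space is a measurable space SE of type 'e measure,
 the underlying probability space Omega carries the measurable structure M, the
 (two-parameter) filtration is F s t (a sub-sigma-algebra of M), the process is X,
 the laws P s x (= P_{s,x}) are probability measures on M, and Z s t are the
 penalisation weights.\<close>

definition time_set :: "real set \<Rightarrow> bool" where
  "time_set I \<longleftrightarrow> I = {0..} \<or> I = range real"

definition penalized_markov ::
  "real set \<Rightarrow> 'e measure \<Rightarrow> 'w measure \<Rightarrow> (real \<Rightarrow> real \<Rightarrow> 'w measure)
   \<Rightarrow> (real \<Rightarrow> 'w \<Rightarrow> 'e) \<Rightarrow> (real \<Rightarrow> 'e \<Rightarrow> 'w measure)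
   \<Rightarrow> (real \<Rightarrow> real \<Rightarrow> 'w \<Rightarrow> real) \<Rightarrow> bool" where
  "penalized_markov I SE M F X P Z \<longleftrightarrow>
     time_set I
   \<comment> \<open>filtration: sub-sigma-algebras of M, increasing in the interval [s,t]\<close>
   \<and> (\<forall>s\<in>I. \<forall>t\<in>I. s \<le> t \<longrightarrow> space (F s t) = space M \<and> sets (F s t) \<subseteq> sets M)
   \<and> (\<forall>s\<in>I. \<forall>s'\<in>I. \<forall>t'\<in>I. \<forall>t\<in>I. s \<le> s' \<and> s' \<le> t' \<and> t' \<le> t
        \<longrightarrow> sets (F s' t') \<subseteq> sets (F s t))
   \<comment> \<open>X_t is F_{s,r}-measurable for s <= t <= r\<close>
   \<and> (\<forall>s\<in>I. \<forall>t\<in>I. \<forall>r\<in>I. s \<le> t \<and> t \<le> r \<longrightarrow> X t \<in> measurable (F s r) SE)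
   \<comment> \<open>P_{s,x} is a probability measure on Omega, measurable in x\<close>
   \<and> (\<forall>s\<in>I. P s \<in> measurable SE (prob_algebra M))
   \<comment> \<open>under P_{s,x} the process starts at x at time s\<close>
   \<and> (\<forall>s\<in>I. \<forall>x\<in>space SE. distr (P s x) SE (X s) = return SE x)
   \<comment> \<open>Markov property: E_{s,x}(G 1_A) = E_{s,x}(1_A E_{u,X_u}(G)) for A in F_{s,u}
       and G >= 0 F_{u,t}-measurable\<close>
   \<and> (\<forall>s\<in>I. \<forall>u\<in>I. \<forall>t\<in>I. \<forall>x\<in>space SE. \<forall>A\<in>sets (F s u).
        \<forall>G \<in> borel_measurable (F u t). s \<le> u \<and> u \<le> t \<longrightarrow>
        (\<integral>\<^sup>+\<omega>. indicator A \<omega> * G \<omega> \<partial>P s x)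
        = (\<integral>\<^sup>+\<omega>. indicator A \<omega> * (\<integral>\<^sup>+\<omega>'. G \<omega>' \<partial>P u (X u \<omega>)) \<partial>P s x))
   \<comment> \<open>Z_{s,t} nonnegative, F_{s,t}-measurable, multiplicative\<close>
   \<and> (\<forall>s\<in>I. \<forall>t\<in>I. s \<le> t \<longrightarrow> Z s t \<in> borel_measurable (F s t) \<and> (\<forall>\<omega>. 0 \<le> Z s t \<omega>))
   \<and> (\<forall>s\<in>I. \<forall>r\<in>I. \<forall>t\<in>I. s \<le> r \<and> r \<le> t \<longrightarrow> (\<forall>\<omega>. Z s r \<omega> * Z r t \<omega> = Z s t \<omega>))
   \<comment> \<open>E_{s,x}(Z_{s,t}) > 0 and sup_y E_{s,y}(Z_{s,t}) < oo\<close>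
   \<and> (\<forall>s\<in>I. \<forall>t\<in>I. s \<le> t \<longrightarrow>
        (\<forall>x\<in>space SE. 0 < (\<integral>\<^sup>+\<omega>. ennreal (Z s t \<omega>) \<partial>P s x))
      \<and> (SUP y\<in>space SE. \<integral>\<^sup>+\<omega>. ennreal (Z s t \<omega>) \<partial>P s y) < \<infinity>)"

definition Emu :: "(real \<Rightarrow> 'e \<Rightarrow> 'w measure) \<Rightarrow> real \<Rightarrow> 'e measure \<Rightarrow> ('w \<Rightarrow> ennreal) \<Rightarrow> ennreal" where
  "Emu P s \<mu> G = (\<integral>\<^sup>+x. (\<integral>\<^sup>+\<omega>. G \<omega> \<partial>P s x) \<partial>\<mu>)"

definition Phi ::
  "'e measure \<Rightarrow> (real \<Rightarrow> 'w \<Rightarrow> 'e) \<Rightarrow> (real \<Rightarrow> 'e \<Rightarrow> 'w measure)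
   \<Rightarrow> (real \<Rightarrow> real \<Rightarrow> 'w \<Rightarrow> real) \<Rightarrow> real \<Rightarrow> real \<Rightarrow> 'e measure \<Rightarrow> 'e measure" where
  "Phi SE X P Z s t \<mu> = measure_of (space SE) (sets SE)
     (\<lambda>A. Emu P s \<mu> (\<lambda>\<omega>. indicator A (X t \<omega>) * ennreal (Z s t \<omega>))
          / Emu P s \<mu> (\<lambda>\<omega>. ennreal (Z s t \<omega>)))"

definition min_measure :: "'e measure \<Rightarrow> 'e measure \<Rightarrow> 'e measure \<Rightarrow> 'e measure" where
  "min_measure SE \<mu> \<nu> = (THE m. sets m = sets SE
      \<and> (\<forall>A\<in>sets SE. emeasure m A \<le> emeasure \<mu> A \<and> emeasure m A \<le> emeasure \<nu> A)
      \<and> (\<forall>m'. sets m' = sets SE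
           \<and> (\<forall>A\<in>sets SE. emeasure m' A \<le> emeasure \<mu> A \<and> emeasure m' A \<le> emeasure \<nu> A)
           \<longrightarrow> (\<forall>A\<in>sets SE. emeasure m' A \<le> emeasure m A)))"

definition nu_meas ::
  "'e measure \<Rightarrow> (real \<Rightarrow> 'w \<Rightarrow> 'e) \<Rightarrow> (real \<Rightarrow> 'e \<Rightarrow> 'w measure)
   \<Rightarrow> (real \<Rightarrow> real \<Rightarrow> 'w \<Rightarrow> real) \<Rightarrow> real \<Rightarrow> 'e \<Rightarrow> 'e \<Rightarrow> 'e measure" where
  "nu_meas SE X P Z s x1 x2 = min_measure SE
      (Phi SE X P Z (s - 1) s (return SE x1)) (Phi SE X P Z (s - 1) s (return SE x2))"

definition d_coef ::
  "real set \<Rightarrow> 'e measure \<Rightarrow> (real \<Rightarrow> 'w \<Rightarrow> 'e) \<Rightarrow> (real \<Rightarrow> 'e \<Rightarrow> 'w measure)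
   \<Rightarrow> (real \<Rightarrow> real \<Rightarrow> 'w \<Rightarrow> real) \<Rightarrow> real \<Rightarrow> real" where
  "d_coef I SE X P Z s = enn2real
     (INF t\<in>{t. 0 \<le> t \<and> s + t \<in> I}. INF x1\<in>space SE. INF x2\<in>space SE.
        Emu P s (nu_meas SE X P Z s x1 x2) (\<lambda>\<omega>. ennreal (Z s (s + t) \<omega>))
        / (SUP x\<in>space SE. \<integral>\<^sup>+\<omega>. ennreal (Z s (s + t) \<omega>) \<partial>P s x))"

definition Kop ::
  "(real \<Rightarrow> 'w \<Rightarrow> 'e) \<Rightarrow> (real \<Rightarrow> 'e \<Rightarrow> 'w measure) \<Rightarrow> (real \<Rightarrow> real \<Rightarrow> 'w \<Rightarrow> real)
   \<Rightarrow> real \<Rightarrow> real \<Rightarrow> real \<Rightarrow> ('e \<Rightarrow> ennreal) \<Rightarrow> 'e \<Rightarrow> ennreal" where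
  "Kop X P Z s t T f x = (\<integral>\<^sup>+\<omega>. f (X t \<omega>) * ennreal (Z s T \<omega>) \<partial>P s x)
                         / (\<integral>\<^sup>+\<omega>. ennreal (Z s T \<omega>) \<partial>P s x)"

definition muK ::
  "'e measure \<Rightarrow> (real \<Rightarrow> 'w \<Rightarrow> 'e) \<Rightarrow> (real \<Rightarrow> 'e \<Rightarrow> 'w measure) \<Rightarrow> (real \<Rightarrow> real \<Rightarrow> 'w \<Rightarrow> real)
   \<Rightarrow> real \<Rightarrow> real \<Rightarrow> real \<Rightarrow> 'e measure \<Rightarrow> 'e measure" where
  "muK SE X P Z s t T \<mu> = measure_of (space SE) (sets SE)
      (\<lambda>A. \<integral>\<^sup>+x. Kop X P Z s t T (indicator A) x \<partial>\<mu>)"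

definition tv_norm :: "'e measure \<Rightarrow> 'e measure \<Rightarrow> 'e measure \<Rightarrow> real" where
  "tv_norm SE \<mu> \<nu> = (SUP A\<in>sets SE. measure \<mu> A - measure \<nu> A)
                    - (INF A\<in>sets SE. measure \<mu> A - measure \<nu> A)"

end

theory Submission
  imports Defs
begin

text \<open>
  Write K^T_{s,t}(x,-) for the law of X_t under the penalised probability
  Z_{s,T} dP_{s,x} / E_{s,x}(Z_{s,T}). By the Markov property and the multiplicativity of Z these
  kernels compose, K^T_{s,t} = K^T_{s,u} K^T_{u,t}. The measure \<mu>K^T_{s,t} is the mixture of
  K^T_{s,t} under \<mu>, and \<Phi>_{s,t}(\<mu>) is the mixture of K^t_{s,t} under \<mu> reweighted by
  E_{s,x}(Z_{s,t}). The one-step kernel K^T_{r-1,r}(x,-) is \<Phi>_{r-1,r}(\<delta>_x) reweighted by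
  E_{r,y}(Z_{r,T}); bounding the normalisation by its supremum shows that K^T_{r-1,r}(x,-) and
  K^T_{r-1,r}(y,-) dominate a common measure of mass at least d_r, so by Dobrushin's argument
  this kernel contracts total variation by the factor 1 - d_r. Cutting [s,t] into \<lfloor>t - s\<rfloor>
  unit steps ending at t, preceded by a step that does not increase total variation, gives the
  product; for \<Phi> the initial total variation distance is at most 2.
\<close>

lemma ennreal_inverse_antimono:
  fixes a b :: ennreal
  assumes "a \<le> b"
  shows "inverse b \<le> inverse a"
proof (cases "a = 0 \<or> b = top")
  case False
  then obtain ra rb where "a = ennreal ra" "b = ennreal rb" "0 < ra" "ra \<le> rb"
    using assms by (cases a; cases b) (auto simp: top_unique)
  then show ?thesis
    by (simp add: inverse_ennreal le_imp_inverse_le)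
qed auto

lemma ennreal_divide_mono:
  fixes a b c d :: ennreal
  assumes "a \<le> b" "d \<le> c"
  shows "a / c \<le> b / d"
proof -
  have "inverse c \<le> inverse d"
    using assms(2) by (rule ennreal_inverse_antimono)
  then show ?thesis
    using assms(1) unfolding divide_ennreal_def by (intro mult_mono) auto
qed

lemma measure_of_eq_measure:
  assumes "sets K = sets N" "\<And>A. A \<in> sets N \<Longrightarrow> f A = emeasure K A"
  shows "measure_of (space N) (sets N) f = K"
proof -
  have "measure_of (space N) (sets N) f = measure_of (space N) (sets N) (emeasure K)"
    by (rule measure_of_eq) (auto simp: sets.sigma_sets_eq assms sets.space_closed)
  also have "\<dots> = K"
    using measure_of_of_measure[of K] assms(1) sets_eq_imp_space_eq[OF assms(1)] by simp
  finally show ?thesis .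
qed

lemma integrable_bounded:
  fixes f :: "'a \<Rightarrow> real"
  assumes "finite_measure \<nu>" "sets \<nu> = sets N" "f \<in> borel_measurable N" "\<forall>x\<in>space N. \<bar>f x\<bar> \<le> C"
  shows "integrable \<nu> f"
proof -
  interpret finite_measure \<nu> by fact
  have space: "space \<nu> = space N" using assms(2) sets_eq_imp_space_eq by blast
  have f: "f \<in> borel_measurable \<nu>" using assms(2,3) measurable_cong_sets by blast
  show ?thesis by (rule integrable_const_bound[where B=C]) (use assms(4) space f in auto)
qed

lemma density_indicator_mono:
  assumes sets: "sets \<mu>a = sets N" "sets \<mu>b = sets N" and B: "B \<in> sets N"
    and le: "\<forall>A\<in>sets N. A \<subseteq> B \<longrightarrow> emeasure \<mu>a A \<le> emeasure \<mu>b A"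
  shows "density \<mu>a (indicator B) \<le> density \<mu>b (indicator B)"
proof (subst le_measure)
  show "sets (density \<mu>a (indicator B)) = sets (density \<mu>b (indicator B))"
    using sets by simp
  show "\<forall>A\<in>sets (density \<mu>a (indicator B)).
          emeasure (density \<mu>a (indicator B)) A \<le> emeasure (density \<mu>b (indicator B)) A"
  proof
    fix A assume "A \<in> sets (density \<mu>a (indicator B))"
    then have A: "A \<in> sets N" using sets by simp
    have "emeasure (density \<mu>a (indicator B)) A = emeasure \<mu>a (B \<inter> A)"
      using A B sets by (intro emeasure_restricted) auto
    also have "\<dots> \<le> emeasure \<mu>b (B \<inter> A)" using le A B by auto
    also have "\<dots> = emeasure (density \<mu>b (indicator B)) A"
      using A B sets by (intro emeasure_restricted[symmetric]) auto
    finally show "emeasure (density \<mu>a (indicator B)) A \<le> emeasure (density \<mu>b (indicator B)) A" .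
  qed
qed

lemma integral_mult_indicator_mono:
  fixes \<phi> :: "'a \<Rightarrow> real"
  assumes fin: "finite_measure \<mu>a" "finite_measure \<mu>b"
    and sets: "sets \<mu>a = sets N" "sets \<mu>b = sets N" and B: "B \<in> sets N"
    and le: "\<forall>A\<in>sets N. A \<subseteq> B \<longrightarrow> emeasure \<mu>a A \<le> emeasure \<mu>b A"
    and \<phi>: "\<phi> \<in> borel_measurable N" and bnd: "\<forall>x\<in>space N. 0 \<le> \<phi> x \<and> \<phi> x \<le> c"
  shows "(\<integral>x. \<phi> x * indicator B x \<partial>\<mu>a) \<le> (\<integral>x. \<phi> x * indicator B x \<partial>\<mu>b)"
proof -
  interpret b: finite_measure \<mu>b by fact
  have space: "space \<mu>a = space N" "space \<mu>b = space N"
    using sets sets_eq_imp_space_eq by blast+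
  have meas: "borel_measurable \<mu>a = borel_measurable N" "borel_measurable \<mu>b = borel_measurable N"
    by (rule measurable_cong_sets; simp add: sets)+
  have [measurable]: "\<phi> \<in> borel_measurable N" "B \<in> sets N" using \<phi> B by auto
  have \<phi>B: "(\<lambda>x. \<phi> x * indicator B x) \<in> borel_measurable N" by measurable
  have ennreal_eq: "ennreal (\<phi> x * indicator B x) = indicator B x * ennreal (\<phi> x)" for x
    by (auto simp: indicator_def)
  have "(\<integral>\<^sup>+x. ennreal (\<phi> x * indicator B x) \<partial>\<mu>a) = (\<integral>\<^sup>+x. ennreal (\<phi> x) \<partial>density \<mu>a (indicator B))"
    unfolding ennreal_eq by (rule nn_integral_density[symmetric]) (use B sets in \<open>auto simp: meas\<close>)
  also have "\<dots> \<le> (\<integral>\<^sup>+x. ennreal (\<phi> x) \<partial>density \<mu>b (indicator B))"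
    by (rule nn_integral_mono_measure[OF _ density_indicator_mono[OF sets B le]]) (use sets in simp)
  also have "\<dots> = (\<integral>\<^sup>+x. ennreal (\<phi> x * indicator B x) \<partial>\<mu>b)"
    unfolding ennreal_eq by (rule nn_integral_density) (use B sets in \<open>auto simp: meas\<close>)
  finally have nn_le: "(\<integral>\<^sup>+x. ennreal (\<phi> x * indicator B x) \<partial>\<mu>a)
                     \<le> (\<integral>\<^sup>+x. ennreal (\<phi> x * indicator B x) \<partial>\<mu>b)" .
  have "(\<integral>\<^sup>+x. ennreal (\<phi> x * indicator B x) \<partial>\<mu>b) \<le> (\<integral>\<^sup>+x. ennreal c \<partial>\<mu>b)"
    by (rule nn_integral_mono) (use bnd space in \<open>auto simp: indicator_def\<close>)
  also have "\<dots> < \<infinity>"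
  proof -
    have "emeasure \<mu>b (space \<mu>b) < \<top>"
      using b.emeasure_finite[of "space \<mu>b"] top.not_eq_extremum by blast
    then show ?thesis by (simp add: ennreal_mult_less_top)
  qed
  finally have finite: "(\<integral>\<^sup>+x. ennreal (\<phi> x * indicator B x) \<partial>\<mu>b) < \<infinity>" .
  have "(\<integral>x. \<phi> x * indicator B x \<partial>\<mu>a) = enn2real (\<integral>\<^sup>+x. ennreal (\<phi> x * indicator B x) \<partial>\<mu>a)"
    by (rule integral_eq_nn_integral) (use bnd space \<phi>B in \<open>auto simp: meas indicator_def\<close>)
  also have "\<dots> \<le> enn2real (\<integral>\<^sup>+x. ennreal (\<phi> x * indicator B x) \<partial>\<mu>b)"
    using nn_le finite by (intro enn2real_mono) auto
  also have "\<dots> = (\<integral>x. \<phi> x * indicator B x \<partial>\<mu>b)"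
    by (rule integral_eq_nn_integral[symmetric]) (use bnd space \<phi>B in \<open>auto simp: meas indicator_def\<close>)
  finally show ?thesis .
qed

lemma measure_bind_eq_integral:
  assumes \<nu>: "prob_space \<nu>" "sets \<nu> = sets N" and K: "K \<in> measurable N (prob_algebra N)"
    and A: "A \<in> sets N"
  shows "measure (bind \<nu> K) A = (\<integral>x. measure (K x) A \<partial>\<nu>)"
proof -
  have space: "space \<nu> = space N" using \<nu>(2) sets_eq_imp_space_eq by blast
  have K_prob: "prob_space (K x)" if "x \<in> space N" for x
    using measurable_space[OF K that] by (auto simp: space_prob_algebra)
  have "(\<lambda>x. measure (K x) A) \<in> borel_measurable N"
    using measurable_compose[OF K measurable_measure_prob_algebra[OF A]] by (simp add: comp_def)
  then have meas: "(\<lambda>x. measure (K x) A) \<in> borel_measurable \<nu>"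
    using \<nu>(2) measurable_cong_sets by blast
  have "emeasure (bind \<nu> K) A = (\<integral>\<^sup>+x. emeasure (K x) A \<partial>\<nu>)"
    using \<nu> by (intro emeasure_bind_prob_algebra[OF _ K A]) (auto simp: space_prob_algebra)
  also have "\<dots> = (\<integral>\<^sup>+x. ennreal (measure (K x) A) \<partial>\<nu>)"
    using K_prob space
    by (intro nn_integral_cong) (auto simp: prob_space_def finite_measure.emeasure_eq_measure)
  finally show ?thesis
    using integral_eq_nn_integral[OF meas] by (simp add: measure_def)
qed

lemma prob_space_density_normalized:
  fixes h :: "'a \<Rightarrow> ennreal"
  assumes \<mu>: "prob_space \<mu>" and h: "h \<in> borel_measurable \<mu>"
    and pos: "\<And>x. x \<in> space \<mu> \<Longrightarrow> 0 < h x" and finite: "(\<integral>\<^sup>+x. h x \<partial>\<mu>) < \<infinity>"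
  shows "prob_space (density \<mu> (\<lambda>x. h x / (\<integral>\<^sup>+x. h x \<partial>\<mu>)))"
proof (rule prob_spaceI)
  interpret prob_space \<mu> by fact
  define c where "c = (\<integral>\<^sup>+x. h x \<partial>\<mu>)"
  have "c \<noteq> 0"
  proof
    assume "c = 0"
    then have "AE x in \<mu>. h x = 0"
      unfolding c_def using nn_integral_0_iff_AE[OF h] by simp
    moreover have "AE x in \<mu>. x \<in> space \<mu>" by simp
    ultimately have "AE x in \<mu>. False"
      by eventually_elim (use pos in force)
    then show False by simp
  qed
  have "emeasure (density \<mu> (\<lambda>x. h x / c)) (space \<mu>) = (\<integral>\<^sup>+x. h x / c \<partial>\<mu>)"
    using h by (auto simp: emeasure_density intro!: nn_integral_cong)
  also have "\<dots> = c / c" unfolding c_def by (rule nn_integral_divide[OF h])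
  also have "\<dots> = 1" using \<open>c \<noteq> 0\<close> finite unfolding c_def by simp
  finally show "emeasure (density \<mu> (\<lambda>x. h x / (\<integral>\<^sup>+x. h x \<partial>\<mu>))) (space (density \<mu> (\<lambda>x. h x / (\<integral>\<^sup>+x. h x \<partial>\<mu>)))) = 1"
    by (simp add: c_def)
qed

lemma nn_integral_mult_eq_if_indicator:
  fixes G1 G2 V :: "'a \<Rightarrow> ennreal"
  assumes sub: "subalgebra N S" and G: "G1 \<in> borel_measurable N" "G2 \<in> borel_measurable N"
    and indicator: "\<And>A. A \<in> sets S \<Longrightarrow>
      (\<integral>\<^sup>+\<omega>. indicator A \<omega> * G1 \<omega> \<partial>N) = (\<integral>\<^sup>+\<omega>. indicator A \<omega> * G2 \<omega> \<partial>N)"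
    and V: "V \<in> borel_measurable S"
  shows "(\<integral>\<^sup>+\<omega>. V \<omega> * G1 \<omega> \<partial>N) = (\<integral>\<^sup>+\<omega>. V \<omega> * G2 \<omega> \<partial>N)"
  using V
proof (induction rule: borel_measurable_induct)
  have meas: "f \<in> borel_measurable N" if "f \<in> borel_measurable S" for f :: "'a \<Rightarrow> ennreal"
    using measurable_from_subalg[OF sub that] .
  have space: "space S = space N" using sub unfolding subalgebra_def by simp
  {
    case (cong f g)
    have "(\<integral>\<^sup>+\<omega>. f \<omega> * H \<omega> \<partial>N) = (\<integral>\<^sup>+\<omega>. g \<omega> * H \<omega> \<partial>N)" for H :: "'a \<Rightarrow> ennreal"
      using cong.hyps(3) space by (intro nn_integral_cong) simp
    then show ?case
      using cong.IH by simp
  next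
    case (set A)
    then show ?case by (rule indicator)
  next
    case (mult v c)
    have [measurable]: "v \<in> borel_measurable N" using meas[OF mult.hyps(2)] .
    have "(\<integral>\<^sup>+\<omega>. c * v \<omega> * H \<omega> \<partial>N) = c * (\<integral>\<^sup>+\<omega>. v \<omega> * H \<omega> \<partial>N)"
      if [measurable]: "H \<in> borel_measurable N" for H :: "'a \<Rightarrow> ennreal"
      by (subst nn_integral_cmult[symmetric]) (auto simp: mult.assoc)
    then show ?case
      using mult.IH G by simp
  next
    case (add v w)
    have [measurable]: "v \<in> borel_measurable N" "w \<in> borel_measurable N"
      using meas[OF add.hyps(1)] meas[OF add.hyps(3)] .
    have "(\<integral>\<^sup>+\<omega>. (w \<omega> + v \<omega>) * H \<omega> \<partial>N) = (\<integral>\<^sup>+\<omega>. w \<omega> * H \<omega> \<partial>N) + (\<integral>\<^sup>+\<omega>. v \<omega> * H \<omega> \<partial>N)"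
      if [measurable]: "H \<in> borel_measurable N" for H :: "'a \<Rightarrow> ennreal"
      by (subst nn_integral_add[symmetric]) (auto simp: distrib_right)
    then show ?case
      using add.IH G by simp
  next
    case (seq U)
    have [measurable]: "U i \<in> borel_measurable N" for i
      using meas[OF seq.hyps(1)] .
    have "(\<integral>\<^sup>+\<omega>. (SUP i. U i) \<omega> * H \<omega> \<partial>N) = (SUP i. \<integral>\<^sup>+\<omega>. U i \<omega> * H \<omega> \<partial>N)"
      if [measurable]: "H \<in> borel_measurable N" for H :: "'a \<Rightarrow> ennreal"
    proof -
      have "(\<integral>\<^sup>+\<omega>. (SUP i. U i) \<omega> * H \<omega> \<partial>N) = (\<integral>\<^sup>+\<omega>. (SUP i. U i \<omega> * H \<omega>) \<partial>N)"
        by (simp add: SUP_mult_right_ennreal image_comp)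
      also have "\<dots> = (SUP i. \<integral>\<^sup>+\<omega>. U i \<omega> * H \<omega> \<partial>N)"
        using seq.hyps(3)
        by (intro nn_integral_monotone_convergence_SUP)
           (auto simp: incseq_def le_fun_def intro!: mult_right_mono)
      finally show ?thesis .
    qed
    then show ?case
      using seq.IH G by simp
  }
qed

section \<open>Total variation and Dobrushin's contraction\<close>

definition sup_diff :: "'a measure \<Rightarrow> 'a measure \<Rightarrow> 'a measure \<Rightarrow> real" where
  "sup_diff N a b = (SUP A\<in>sets N. measure a A - measure b A)"

lemma bdd_measure_diff:
  assumes "prob_space a" "prob_space b"
  shows "bdd_above ((\<lambda>A. measure a A - measure b A) ` sets N)"
    and "bdd_below ((\<lambda>A. measure a A - measure b A) ` sets N)"
proof -
  interpret a: prob_space a by fact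
  interpret b: prob_space b by fact
  have "measure a A - measure b A \<le> 1" "-1 \<le> measure a A - measure b A" for A
    using a.prob_le_1[of A] b.prob_le_1[of A] measure_nonneg[of a A] measure_nonneg[of b A]
    by linarith+
  then show "bdd_above ((\<lambda>A. measure a A - measure b A) ` sets N)"
    and "bdd_below ((\<lambda>A. measure a A - measure b A) ` sets N)"
    by (auto intro!: bdd_aboveI[where M=1] bdd_belowI[where m="-1"])
qed

lemma sup_diff_le_1:
  assumes "prob_space a" "prob_space b"
  shows "sup_diff N a b \<le> 1"
proof -
  interpret a: prob_space a by fact
  have "measure a A - measure b A \<le> 1" for A
    using a.prob_le_1[of A] measure_nonneg[of b A] by linarith
  then show ?thesis
    unfolding sup_diff_def by (intro cSUP_least) auto
qed

lemma tv_norm_eq_twice_sup_diff: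
  assumes a: "prob_space a" "sets a = sets N" and b: "prob_space b" "sets b = sets N"
  shows "tv_norm N a b = 2 * sup_diff N a b"
proof -
  interpret a: prob_space a by fact
  interpret b: prob_space b by fact
  define f where "f A = measure a A - measure b A" for A
  have space: "space a = space N" "space b = space N"
    using a b sets_eq_imp_space_eq by blast+
  have f_compl: "f (space N - A) = - f A" if "A \<in> sets N" for A
  proof -
    have "measure a (space N - A) = 1 - measure a A" "measure b (space N - A) = 1 - measure b A"
      using a.prob_compl[of A] b.prob_compl[of A] that a(2) b(2) space by simp_all
    then show ?thesis unfolding f_def by simp
  qed
  have bdd: "bdd_above (f ` sets N)" "bdd_below (f ` sets N)"
    using bdd_measure_diff[OF a(1) b(1)] unfolding f_def by auto
  have ne: "sets N \<noteq> {}" by auto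
  have "(INF A\<in>sets N. f A) = - (SUP A\<in>sets N. f A)"
  proof (rule antisym)
    have "(SUP A\<in>sets N. f A) \<le> - (INF A\<in>sets N. f A)"
    proof (rule cSUP_least[OF ne])
      fix A assume A: "A \<in> sets N"
      have "(INF A\<in>sets N. f A) \<le> f (space N - A)"
        using A by (intro cINF_lower[OF bdd(2)]) auto
      then show "f A \<le> - (INF A\<in>sets N. f A)"
        using f_compl[OF A] by simp
    qed
    then show "(INF A\<in>sets N. f A) \<le> - (SUP A\<in>sets N. f A)" by simp
    show "- (SUP A\<in>sets N. f A) \<le> (INF A\<in>sets N. f A)"
    proof (rule cINF_greatest[OF ne])
      fix A assume A: "A \<in> sets N"
      have "f (space N - A) \<le> (SUP A\<in>sets N. f A)"
        using A by (intro cSUP_upper[OF _ bdd(1)]) auto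
      then show "- (SUP A\<in>sets N. f A) \<le> f A"
        using f_compl[OF A] by simp
    qed
  qed
  then show ?thesis
    unfolding tv_norm_def sup_diff_def f_def by simp
qed

lemma integral_indicator_diff_le:
  fixes g :: "'a \<Rightarrow> real"
  assumes fin: "finite_measure \<nu>1" "finite_measure \<nu>2"
    and sets: "sets \<nu>1 = sets N" "sets \<nu>2 = sets N" and Y: "Y \<in> sets N"
    and le: "\<forall>A\<in>sets N. A \<subseteq> Y \<longrightarrow> emeasure \<nu>2 A \<le> emeasure \<nu>1 A"
    and g: "g \<in> borel_measurable N" and bnd: "\<forall>x\<in>space N. 0 \<le> g x \<and> g x \<le> \<delta>"
  shows "(\<integral>x. g x * indicator Y x \<partial>\<nu>1) - (\<integral>x. g x * indicator Y x \<partial>\<nu>2)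
      \<le> \<delta> * (measure \<nu>1 Y - measure \<nu>2 Y)"
proof -
  have [measurable]: "g \<in> borel_measurable N" "Y \<in> sets N" using g Y by auto
  have \<delta>_minus_g: "(\<integral>x. (\<delta> - g x) * indicator Y x \<partial>\<nu>)
      = \<delta> * measure \<nu> Y - (\<integral>x. g x * indicator Y x \<partial>\<nu>)"
    if \<nu>: "finite_measure \<nu>" "sets \<nu> = sets N" for \<nu>
  proof -
    have bounds: "\<forall>x\<in>space N. \<bar>\<delta> * indicator Y x\<bar> \<le> \<delta>" "\<forall>x\<in>space N. \<bar>g x * indicator Y x\<bar> \<le> \<delta>"
      using bnd by (auto simp: indicator_def)
    have "integrable \<nu> (\<lambda>x. \<delta> * indicator Y x)" "integrable \<nu> (\<lambda>x. g x * indicator Y x)"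
      by (rule integrable_bounded[OF \<nu> _ bounds(1)], measurable)
         (rule integrable_bounded[OF \<nu> _ bounds(2)], measurable)
    then have "(\<integral>x. \<delta> * indicator Y x - g x * indicator Y x \<partial>\<nu>)
        = (\<integral>x. \<delta> * indicator Y x \<partial>\<nu>) - (\<integral>x. g x * indicator Y x \<partial>\<nu>)"
      by (rule Bochner_Integration.integral_diff)
    then show ?thesis
      using \<nu> Y by (simp add: left_diff_distrib finite_measure.emeasure_finite)
  qed
  have "(\<integral>x. (\<delta> - g x) * indicator Y x \<partial>\<nu>2) \<le> (\<integral>x. (\<delta> - g x) * indicator Y x \<partial>\<nu>1)"
    using le bnd by (intro integral_mult_indicator_mono[OF fin(2,1) sets(2,1) Y, where c=\<delta>]) auto
  then show ?thesis
    using \<delta>_minus_g[OF fin(1) sets(1)] \<delta>_minus_g[OF fin(2) sets(2)] by (simp add: right_diff_distrib)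
qed

text \<open>Off the positive set of a Hahn decomposition of \<nu>1 - \<nu>2 the difference of the
  integrals is nonpositive.\<close>
lemma integral_diff_le_sup_diff:
  fixes g :: "'a \<Rightarrow> real"
  assumes n1: "prob_space \<nu>1" "sets \<nu>1 = sets N" and n2: "prob_space \<nu>2" "sets \<nu>2 = sets N"
    and g: "g \<in> borel_measurable N" and bnd: "\<forall>x\<in>space N. 0 \<le> g x \<and> g x \<le> \<delta>"
  shows "(\<integral>x. g x \<partial>\<nu>1) - (\<integral>x. g x \<partial>\<nu>2) \<le> \<delta> * sup_diff N \<nu>1 \<nu>2"
proof -
  interpret p1: prob_space \<nu>1 by fact
  interpret p2: prob_space \<nu>2 by fact
  have fin: "finite_measure \<nu>1" "finite_measure \<nu>2" by unfold_locales
  have space: "space \<nu>1 = space N" "space \<nu>2 = space N"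
    using n1(2) n2(2) sets_eq_imp_space_eq by blast+
  have \<delta>: "0 \<le> \<delta>" using bnd p1.not_empty space by force
  have [measurable]: "g \<in> borel_measurable N" by (rule g)
  obtain Y where Y: "Y \<in> sets N" "\<forall>A\<in>sets N. A \<subseteq> Y \<longrightarrow> emeasure \<nu>2 A \<le> emeasure \<nu>1 A"
      "\<forall>A\<in>sets N. A \<inter> Y = {} \<longrightarrow> emeasure \<nu>1 A \<le> emeasure \<nu>2 A"
    using finite_unsigned_Hahn_decomposition[OF fin] n1 n2 by auto
  define Yc where "Yc = space N - Y"
  have [measurable]: "Y \<in> sets N" "Yc \<in> sets N" using Y unfolding Yc_def by auto
  have split: "(\<integral>x. g x \<partial>\<nu>) = (\<integral>x. g x * indicator Y x \<partial>\<nu>) + (\<integral>x. g x * indicator Yc x \<partial>\<nu>)"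
    if \<nu>: "finite_measure \<nu>" "sets \<nu> = sets N" for \<nu>
  proof -
    have "space \<nu> = space N" using \<nu>(2) sets_eq_imp_space_eq by blast
    then have "(\<integral>x. g x \<partial>\<nu>) = (\<integral>x. g x * indicator Y x + g x * indicator Yc x \<partial>\<nu>)"
      by (intro Bochner_Integration.integral_cong) (auto simp: Yc_def indicator_def)
    also have "\<dots> = (\<integral>x. g x * indicator Y x \<partial>\<nu>) + (\<integral>x. g x * indicator Yc x \<partial>\<nu>)"
      using bnd \<delta>
      by (intro Bochner_Integration.integral_add integrable_bounded[OF \<nu>, where C=\<delta>])
         (auto simp: indicator_def)
    finally show ?thesis .
  qed
  have "(\<integral>x. g x * indicator Yc x \<partial>\<nu>1) \<le> (\<integral>x. g x * indicator Yc x \<partial>\<nu>2)"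
    using Y(3) bnd by (intro integral_mult_indicator_mono[OF fin n1(2) n2(2), where c=\<delta>]) (auto simp: Yc_def)
  moreover have "(\<integral>x. g x * indicator Y x \<partial>\<nu>1) - (\<integral>x. g x * indicator Y x \<partial>\<nu>2)
      \<le> \<delta> * (measure \<nu>1 Y - measure \<nu>2 Y)"
    using Y(2) bnd by (intro integral_indicator_diff_le[OF fin n1(2) n2(2) Y(1)]) auto
  moreover have "measure \<nu>1 Y - measure \<nu>2 Y \<le> sup_diff N \<nu>1 \<nu>2"
    unfolding sup_diff_def by (rule cSUP_upper[OF Y(1) bdd_measure_diff(1)[OF n1(1) n2(1)]])
  then have "\<delta> * (measure \<nu>1 Y - measure \<nu>2 Y) \<le> \<delta> * sup_diff N \<nu>1 \<nu>2"
    using \<delta> by (rule mult_left_mono)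
  ultimately show ?thesis
    using split[OF fin(1) n1(2)] split[OF fin(2) n2(2)] by linarith
qed

lemma integral_diff_le_oscillation:
  fixes k :: "'a \<Rightarrow> real"
  assumes n1: "prob_space \<nu>1" "sets \<nu>1 = sets N" and n2: "prob_space \<nu>2" "sets \<nu>2 = sets N"
    and k: "k \<in> borel_measurable N" and bnd: "\<forall>x\<in>space N. \<bar>k x\<bar> \<le> C"
    and osc: "\<forall>x\<in>space N. \<forall>y\<in>space N. k x - k y \<le> \<delta>"
  shows "(\<integral>x. k x \<partial>\<nu>1) - (\<integral>x. k x \<partial>\<nu>2) \<le> \<delta> * sup_diff N \<nu>1 \<nu>2"
proof -
  interpret p1: prob_space \<nu>1 by fact
  have space: "space \<nu>1 = space N" using n1(2) sets_eq_imp_space_eq by blast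
  have ne: "space N \<noteq> {}" using p1.not_empty space by simp
  define m where "m = (INF x\<in>space N. k x)"
  have bdd: "bdd_below (k ` space N)" using bnd by (intro bdd_belowI[where m="-C"]) force
  have shifted: "0 \<le> k x - m \<and> k x - m \<le> \<delta>" if "x \<in> space N" for x
  proof
    show "0 \<le> k x - m" unfolding m_def using cINF_lower[OF bdd that] by simp
    have "k x - \<delta> \<le> m" unfolding m_def using osc that by (intro cINF_greatest[OF ne]) force
    then show "k x - m \<le> \<delta>" by simp
  qed
  have shift: "(\<integral>x. k x - m \<partial>\<nu>) = (\<integral>x. k x \<partial>\<nu>) - m" if "prob_space \<nu>" "sets \<nu> = sets N" for \<nu>
  proof -
    interpret prob_space \<nu> by fact
    have "integrable \<nu> k"
      using that k bnd by (intro integrable_bounded) (auto simp: finite_measure_axioms)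
    then show ?thesis by (simp add: prob_space)
  qed
  have "(\<integral>x. k x - m \<partial>\<nu>1) - (\<integral>x. k x - m \<partial>\<nu>2) \<le> \<delta> * sup_diff N \<nu>1 \<nu>2"
    using k shifted by (intro integral_diff_le_sup_diff[OF n1 n2]) auto
  then show ?thesis using shift[OF n1] shift[OF n2] by simp
qed

lemma sup_diff_bind_le:
  assumes n1: "prob_space \<nu>1" "sets \<nu>1 = sets N" and n2: "prob_space \<nu>2" "sets \<nu>2 = sets N"
    and K: "K \<in> measurable N (prob_algebra N)"
    and osc: "\<And>x y A. x \<in> space N \<Longrightarrow> y \<in> space N \<Longrightarrow> A \<in> sets N \<Longrightarrow>
                 measure (K x) A - measure (K y) A \<le> \<delta>"
  shows "sup_diff N (bind \<nu>1 K) (bind \<nu>2 K) \<le> \<delta> * sup_diff N \<nu>1 \<nu>2"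
  unfolding sup_diff_def[of N "bind \<nu>1 K"]
proof (rule cSUP_least)
  fix A assume A: "A \<in> sets N"
  have meas: "(\<lambda>x. measure (K x) A) \<in> borel_measurable N"
    using measurable_compose[OF K measurable_measure_prob_algebra[OF A]] by (simp add: comp_def)
  have "\<forall>x\<in>space N. \<bar>measure (K x) A\<bar> \<le> 1"
    using measurable_space[OF K] by (auto simp: space_prob_algebra prob_space.prob_le_1)
  then show "measure (bind \<nu>1 K) A - measure (bind \<nu>2 K) A \<le> \<delta> * sup_diff N \<nu>1 \<nu>2"
    unfolding measure_bind_eq_integral[OF n1 K A] measure_bind_eq_integral[OF n2 K A]
    using osc A by (intro integral_diff_le_oscillation[OF n1 n2 meas]) auto
qed auto

lemma sup_diff_bind_le_sup_diff:
  assumes n1: "prob_space \<nu>1" "sets \<nu>1 = sets N" and n2: "prob_space \<nu>2" "sets \<nu>2 = sets N"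
    and K: "K \<in> measurable N (prob_algebra N)"
  shows "sup_diff N (bind \<nu>1 K) (bind \<nu>2 K) \<le> sup_diff N \<nu>1 \<nu>2"
proof -
  have "measure (K x) A - measure (K y) A \<le> 1" if "x \<in> space N" for x y A
  proof -
    have "prob_space (K x)"
      using measurable_space[OF K that] by (simp add: space_prob_algebra)
    then show ?thesis
      using prob_space.prob_le_1[of "K x" A] measure_nonneg[of "K y" A] by linarith
  qed
  then show ?thesis
    using sup_diff_bind_le[OF n1 n2 K, of 1] by simp
qed

lemma measure_diff_le_one_minus_minorant:
  assumes K1: "prob_space K1" "sets K1 = sets N" and K2: "prob_space K2" "sets K2 = sets N"
    and m: "sets m = sets N" and A: "A \<in> sets N"
    and le1: "\<And>B. B \<in> sets N \<Longrightarrow> emeasure m B \<le> emeasure K1 B"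
    and le2: "\<And>B. B \<in> sets N \<Longrightarrow> emeasure m B \<le> emeasure K2 B"
  shows "measure K1 A - measure K2 A \<le> 1 - measure m (space N)"
proof -
  interpret K1: prob_space K1 by fact
  interpret K2: prob_space K2 by fact
  have space: "space K1 = space N" "space m = space N"
    using K1(2) m sets_eq_imp_space_eq by blast+
  have "emeasure m (space m) \<le> 1"
    using le1[OF sets.top] K1.emeasure_space_1 unfolding space by simp
  then have "emeasure m (space m) \<noteq> \<infinity>"
    using ennreal_one_less_top by (metis infinity_ennreal_def leD)
  then interpret m: finite_measure m
    by (rule finite_measureI)
  have Ac: "space N - A \<in> sets N" using A by (rule sets.compl_sets)
  have "measure m A \<le> measure K2 A"
    using le2[OF A] by (simp add: m.emeasure_eq_measure K2.emeasure_eq_measure)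
  moreover have "measure m (space N - A) \<le> measure K1 (space N - A)"
    using le1[OF Ac] by (simp add: m.emeasure_eq_measure K1.emeasure_eq_measure)
  moreover have "measure K1 (space N - A) = 1 - measure K1 A"
    using K1.prob_compl[of A] A K1(2) unfolding space by simp
  moreover have "measure m (space m - A) = measure m (space m) - measure m A"
    using A m by (intro m.finite_measure_compl) simp
  ultimately show ?thesis
    unfolding space by linarith
qed

section \<open>The largest common minorant of two finite measures\<close>

definition greatest_common_minorant :: "'a measure \<Rightarrow> 'a measure \<Rightarrow> 'a measure \<Rightarrow> 'a measure \<Rightarrow> bool" where
  "greatest_common_minorant N \<mu> \<nu> m \<longleftrightarrow> sets m = sets N
      \<and> (\<forall>A\<in>sets N. emeasure m A \<le> emeasure \<mu> A \<and> emeasure m A \<le> emeasure \<nu> A)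
      \<and> (\<forall>m'. sets m' = sets N
           \<and> (\<forall>A\<in>sets N. emeasure m' A \<le> emeasure \<mu> A \<and> emeasure m' A \<le> emeasure \<nu> A)
           \<longrightarrow> (\<forall>A\<in>sets N. emeasure m' A \<le> emeasure m A))"

lemma min_measure_def': "min_measure N \<mu> \<nu> = (THE m. greatest_common_minorant N \<mu> \<nu> m)"
  unfolding min_measure_def greatest_common_minorant_def ..

lemma greatest_common_minorant_unique:
  assumes "greatest_common_minorant N \<mu> \<nu> m" "greatest_common_minorant N \<mu> \<nu> m'"
  shows "m = m'"
proof (rule measure_eqI)
  show "sets m = sets m'" using assms unfolding greatest_common_minorant_def by simp
  fix A assume "A \<in> sets m"
  then have "A \<in> sets N" using assms(1) unfolding greatest_common_minorant_def by simp
  then show "emeasure m A = emeasure m' A"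
    using assms unfolding greatest_common_minorant_def by (meson order.antisym)
qed

lemma countably_additive_splice:
  assumes sets: "sets \<mu> = sets N" "sets \<nu> = sets N" and Y: "Y \<in> sets N"
  shows "countably_additive (sets N) (\<lambda>A. emeasure \<nu> (A \<inter> Y) + emeasure \<mu> (A - Y))"
  unfolding countably_additive_def
proof (intro allI impI)
  fix A :: "nat \<Rightarrow> _" assume A: "range A \<subseteq> sets N" "disjoint_family A"
  have disj: "disjoint_family (\<lambda>i. A i \<inter> Y)" "disjoint_family (\<lambda>i. A i - Y)"
    using A(2) unfolding disjoint_family_on_def by auto
  have range: "range (\<lambda>i. A i \<inter> Y) \<subseteq> sets \<nu>" "range (\<lambda>i. A i - Y) \<subseteq> sets \<mu>"
    using A(1) Y sets by auto
  have unions: "(\<Union>i. A i \<inter> Y) = (\<Union> (range A)) \<inter> Y" "(\<Union>i. A i - Y) = (\<Union> (range A)) - Y"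
    by auto
  have "(\<Sum>i. emeasure \<nu> (A i \<inter> Y) + emeasure \<mu> (A i - Y))
      = (\<Sum>i. emeasure \<nu> (A i \<inter> Y)) + (\<Sum>i. emeasure \<mu> (A i - Y))"
    by (simp add: suminf_add)
  then show "(\<Sum>i. emeasure \<nu> (A i \<inter> Y) + emeasure \<mu> (A i - Y))
      = emeasure \<nu> (\<Union> (range A) \<inter> Y) + emeasure \<mu> (\<Union> (range A) - Y)"
    using suminf_emeasure[OF range(1) disj(1)] suminf_emeasure[OF range(2) disj(2)]
    unfolding unions by simp
qed

text \<open>The minorant is \<nu> on the positive set of a Hahn decomposition of \<mu> - \<nu>
  and \<mu> off it.\<close>
lemma ex_greatest_common_minorant:
  assumes fin: "finite_measure \<mu>" "finite_measure \<nu>" and sets: "sets \<mu> = sets N" "sets \<nu> = sets N"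
  shows "\<exists>m. greatest_common_minorant N \<mu> \<nu> m"
proof -
  obtain Y where Y: "Y \<in> sets N" "\<forall>A\<in>sets N. A \<subseteq> Y \<longrightarrow> emeasure \<nu> A \<le> emeasure \<mu> A"
      "\<forall>A\<in>sets N. A \<inter> Y = {} \<longrightarrow> emeasure \<mu> A \<le> emeasure \<nu> A"
    using finite_unsigned_Hahn_decomposition[OF fin] sets by auto
  define f where "f A = emeasure \<nu> (A \<inter> Y) + emeasure \<mu> (A - Y)" for A
  define m where "m = measure_of (space N) (sets N) f"
  have sets_m: "sets m = sets N" unfolding m_def by simp
  have emeasure_m: "emeasure m A = f A" if "A \<in> sets N" for A
    unfolding m_def f_def
    using countably_additive_splice[OF sets Y(1)] that
    by (intro emeasure_measure_of_sigma) (auto simp: positive_def sets.sigma_algebra_axioms)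
  have parts: "A \<inter> Y \<in> sets N" "A - Y \<in> sets N" if "A \<in> sets N" for A
    using that Y(1) by auto
  have split: "emeasure m' A = emeasure m' (A \<inter> Y) + emeasure m' (A - Y)"
    if "sets m' = sets N" "A \<in> sets N" for m' A
  proof -
    have "A = (A \<inter> Y) \<union> (A - Y)" "(A \<inter> Y) \<inter> (A - Y) = {}" by auto
    then show ?thesis
      using plus_emeasure[of "A \<inter> Y" m' "A - Y"] parts[OF that(2)] that(1) by simp
  qed
  have below: "f A \<le> emeasure \<mu> A \<and> f A \<le> emeasure \<nu> A" if A: "A \<in> sets N" for A
  proof -
    have "emeasure \<nu> (A \<inter> Y) \<le> emeasure \<mu> (A \<inter> Y)"
      using Y(2)[rule_format, OF parts(1)[OF A]] by blast
    moreover have "emeasure \<mu> (A - Y) \<le> emeasure \<nu> (A - Y)"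
      using Y(3)[rule_format, OF parts(2)[OF A]] by blast
    ultimately show ?thesis
      unfolding f_def split[OF sets(1) A] split[OF sets(2) A]
      by (intro conjI add_mono order.refl)
  qed
  have greatest: "emeasure m' A \<le> f A"
    if "sets m' = sets N" "\<forall>A\<in>sets N. emeasure m' A \<le> emeasure \<mu> A \<and> emeasure m' A \<le> emeasure \<nu> A"
      and A: "A \<in> sets N" for m' A
    unfolding split[OF that(1) A] f_def using that(2) parts[OF A] by (intro add_mono) auto
  have "greatest_common_minorant N \<mu> \<nu> m"
    unfolding greatest_common_minorant_def
  proof (intro conjI ballI allI impI)
    show "sets m = sets N" by (rule sets_m)
    fix A assume "A \<in> sets N"
    then show "emeasure m A \<le> emeasure \<mu> A" "emeasure m A \<le> emeasure \<nu> A"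
      using below emeasure_m by auto
  next
    fix m' A
    assume "sets m' = sets N \<and> (\<forall>A\<in>sets N. emeasure m' A \<le> emeasure \<mu> A \<and> emeasure m' A \<le> emeasure \<nu> A)"
      and "A \<in> sets N"
    then show "emeasure m' A \<le> emeasure m A"
      using greatest emeasure_m by auto
  qed
  then show ?thesis ..
qed

lemma min_measure_minorant:
  assumes "finite_measure \<mu>" "finite_measure \<nu>" "sets \<mu> = sets N" "sets \<nu> = sets N"
  shows "sets (min_measure N \<mu> \<nu>) = sets N"
    and "\<And>A. A \<in> sets N \<Longrightarrow> emeasure (min_measure N \<mu> \<nu>) A \<le> emeasure \<mu> A"
    and "\<And>A. A \<in> sets N \<Longrightarrow> emeasure (min_measure N \<mu> \<nu>) A \<le> emeasure \<nu> A"
proof -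
  obtain m where m: "greatest_common_minorant N \<mu> \<nu> m"
    using ex_greatest_common_minorant[OF assms] ..
  then have "greatest_common_minorant N \<mu> \<nu> (min_measure N \<mu> \<nu>)"
    unfolding min_measure_def' by (rule theI) (rule greatest_common_minorant_unique[OF _ m])
  then show "sets (min_measure N \<mu> \<nu>) = sets N"
    and "\<And>A. A \<in> sets N \<Longrightarrow> emeasure (min_measure N \<mu> \<nu>) A \<le> emeasure \<mu> A"
    and "\<And>A. A \<in> sets N \<Longrightarrow> emeasure (min_measure N \<mu> \<nu>) A \<le> emeasure \<nu> A"
    unfolding greatest_common_minorant_def by blast+
qed

locale penalized_markov_setting =
  fixes I :: "real set" and SE :: "'e measure" and M :: "'w measure"
    and F :: "real \<Rightarrow> real \<Rightarrow> 'w measure" and X :: "real \<Rightarrow> 'w \<Rightarrow> 'e"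
    and P :: "real \<Rightarrow> 'e \<Rightarrow> 'w measure" and Z :: "real \<Rightarrow> real \<Rightarrow> 'w \<Rightarrow> real"
  assumes setting: "penalized_markov I SE M F X P Z"
begin

lemma time_set: "time_set I"
  using setting by (simp add: penalized_markov_def)

lemma subalgebra_F: "s \<in> I \<Longrightarrow> t \<in> I \<Longrightarrow> s \<le> t \<Longrightarrow> subalgebra M (F s t)"
  using setting by (simp add: penalized_markov_def subalgebra_def)

lemma X_measurable_F:
  "s \<in> I \<Longrightarrow> t \<in> I \<Longrightarrow> r \<in> I \<Longrightarrow> s \<le> t \<Longrightarrow> t \<le> r \<Longrightarrow> X t \<in> measurable (F s r) SE"
  using setting by (simp add: penalized_markov_def)

lemma P_measurable: "s \<in> I \<Longrightarrow> P s \<in> measurable SE (prob_algebra M)"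
  using setting by (simp add: penalized_markov_def)

lemma markov_property:
  assumes "s \<in> I" "u \<in> I" "t \<in> I" "s \<le> u" "u \<le> t" "x \<in> space SE" "A \<in> sets (F s u)"
    and "G \<in> borel_measurable (F u t)"
  shows "(\<integral>\<^sup>+\<omega>. indicator A \<omega> * G \<omega> \<partial>P s x)
       = (\<integral>\<^sup>+\<omega>. indicator A \<omega> * (\<integral>\<^sup>+\<omega>'. G \<omega>' \<partial>P u (X u \<omega>)) \<partial>P s x)"
  using setting assms by (simp add: penalized_markov_def)

lemma Z_measurable_F: "s \<in> I \<Longrightarrow> t \<in> I \<Longrightarrow> s \<le> t \<Longrightarrow> Z s t \<in> borel_measurable (F s t)"
  using setting by (simp add: penalized_markov_def)

lemma Z_nonneg: "s \<in> I \<Longrightarrow> t \<in> I \<Longrightarrow> s \<le> t \<Longrightarrow> 0 \<le> Z s t \<omega>"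
  using setting by (simp add: penalized_markov_def)

lemma Z_mult:
  "s \<in> I \<Longrightarrow> r \<in> I \<Longrightarrow> t \<in> I \<Longrightarrow> s \<le> r \<Longrightarrow> r \<le> t \<Longrightarrow> Z s r \<omega> * Z r t \<omega> = Z s t \<omega>"
  using setting by (simp add: penalized_markov_def)

lemma ennreal_Z_mult:
  "s \<in> I \<Longrightarrow> r \<in> I \<Longrightarrow> t \<in> I \<Longrightarrow> s \<le> r \<Longrightarrow> r \<le> t
     \<Longrightarrow> ennreal (Z s t \<omega>) = ennreal (Z s r \<omega>) * ennreal (Z r t \<omega>)"
  using Z_mult[of s r t] Z_nonneg by (simp add: ennreal_mult[symmetric])

lemma time_nonneg: "r \<in> I \<Longrightarrow> 0 \<le> r"
  using time_set unfolding time_set_def by auto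

lemma time_minus_nat:
  assumes "r \<in> I" "real k \<le> r"
  shows "r - real k \<in> I"
proof (cases "I = range real")
  case True
  then obtain m where m: "r = real m" using assms by auto
  then have "r - real k = real (m - k)" using assms by (simp add: of_nat_diff)
  then show ?thesis using True by (metis rangeI)
next
  case False
  then have "I = {0..}" using time_set unfolding time_set_def by blast
  then show ?thesis using assms by simp
qed

lemma X_measurable: "t \<in> I \<Longrightarrow> X t \<in> measurable M SE"
  using X_measurable_F[of t t t] subalgebra_F[of t t] measurable_from_subalg by blast

lemma Z_measurable: "s \<in> I \<Longrightarrow> t \<in> I \<Longrightarrow> s \<le> t \<Longrightarrow> Z s t \<in> borel_measurable M"
  using Z_measurable_F subalgebra_F measurable_from_subalg by blast

lemma P_measurable_subprob: "s \<in> I \<Longrightarrow> P s \<in> measurable SE (subprob_algebra M)"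
  using P_measurable measurable_prob_algebraD by blast

lemma sets_P: "s \<in> I \<Longrightarrow> x \<in> space SE \<Longrightarrow> sets (P s x) = sets M"
  using measurable_space[OF P_measurable] by (auto simp: space_prob_algebra)

lemma space_P: "s \<in> I \<Longrightarrow> x \<in> space SE \<Longrightarrow> space (P s x) = space M"
  using sets_P sets_eq_imp_space_eq by blast

lemma borel_measurable_P:
  "s \<in> I \<Longrightarrow> x \<in> space SE \<Longrightarrow> borel_measurable (P s x) = borel_measurable M"
  by (rule measurable_cong_sets) (auto simp: sets_P)

lemma expectation_measurable:
  "s \<in> I \<Longrightarrow> G \<in> borel_measurable M \<Longrightarrow> (\<lambda>x. \<integral>\<^sup>+\<omega>. G \<omega> \<partial>P s x) \<in> borel_measurable SE"
  using measurable_compose[OF P_measurable_subprob nn_integral_measurable_subprob_algebra] by blast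

lemma markov_property_nn:
  fixes V G :: "'w \<Rightarrow> ennreal"
  assumes times: "s \<in> I" "u \<in> I" "t \<in> I" "s \<le> u" "u \<le> t" and x: "x \<in> space SE"
    and V: "V \<in> borel_measurable (F s u)" and G: "G \<in> borel_measurable (F u t)"
  shows "(\<integral>\<^sup>+\<omega>. V \<omega> * G \<omega> \<partial>P s x) = (\<integral>\<^sup>+\<omega>. V \<omega> * (\<integral>\<^sup>+\<omega>'. G \<omega>' \<partial>P u (X u \<omega>)) \<partial>P s x)"
proof (rule nn_integral_mult_eq_if_indicator[OF _ _ _ _ V])
  have sub: "subalgebra M (F s u)" "subalgebra M (F u t)" using times subalgebra_F by auto
  have PM: "borel_measurable (P s x) = borel_measurable M"
    using borel_measurable_P[OF times(1) x] .
  show "subalgebra (P s x) (F s u)"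
    using sub(1) sets_P[OF times(1) x] space_P[OF times(1) x] unfolding subalgebra_def by simp
  show "G \<in> borel_measurable (P s x)"
    unfolding PM using measurable_from_subalg[OF sub(2) G] .
  show "(\<lambda>\<omega>. \<integral>\<^sup>+\<omega>'. G \<omega>' \<partial>P u (X u \<omega>)) \<in> borel_measurable (P s x)"
    unfolding PM
    using measurable_compose[OF X_measurable[OF times(2)]
        expectation_measurable[OF times(2) measurable_from_subalg[OF sub(2) G]]]
    by (simp add: comp_def)
  show "(\<integral>\<^sup>+\<omega>. indicator A \<omega> * G \<omega> \<partial>P s x)
      = (\<integral>\<^sup>+\<omega>. indicator A \<omega> * (\<integral>\<^sup>+\<omega>'. G \<omega>' \<partial>P u (X u \<omega>)) \<partial>P s x)"
    if "A \<in> sets (F s u)" for A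
    using markov_property[OF times x that G] .
qed

section \<open>The penalised kernels\<close>

definition mass :: "real \<Rightarrow> real \<Rightarrow> 'e \<Rightarrow> ennreal" where
  "mass s t x = (\<integral>\<^sup>+\<omega>. ennreal (Z s t \<omega>) \<partial>P s x)"

definition sup_mass :: "real \<Rightarrow> real \<Rightarrow> ennreal" where
  "sup_mass s t = (SUP y\<in>space SE. mass s t y)"

lemma mass_pos: "s \<in> I \<Longrightarrow> t \<in> I \<Longrightarrow> s \<le> t \<Longrightarrow> x \<in> space SE \<Longrightarrow> 0 < mass s t x"
  using setting by (simp add: penalized_markov_def mass_def)

lemma sup_mass_finite: "s \<in> I \<Longrightarrow> t \<in> I \<Longrightarrow> s \<le> t \<Longrightarrow> sup_mass s t < \<infinity>"
  using setting by (simp add: penalized_markov_def mass_def sup_mass_def)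

lemma mass_le_sup_mass: "x \<in> space SE \<Longrightarrow> mass s t x \<le> sup_mass s t"
  unfolding sup_mass_def by (rule SUP_upper)

lemma mass_finite: "s \<in> I \<Longrightarrow> t \<in> I \<Longrightarrow> s \<le> t \<Longrightarrow> x \<in> space SE \<Longrightarrow> mass s t x < \<infinity>"
  using mass_le_sup_mass sup_mass_finite le_less_trans by blast

lemma mass_measurable:
  assumes "s \<in> I" "t \<in> I" "s \<le> t"
  shows "mass s t \<in> borel_measurable SE"
proof -
  have [measurable]: "Z s t \<in> borel_measurable M" using assms by (rule Z_measurable)
  show ?thesis unfolding mass_def by (intro expectation_measurable assms) measurable
qed

definition Kmeasure :: "real \<Rightarrow> real \<Rightarrow> real \<Rightarrow> 'e \<Rightarrow> 'e measure" where
  "Kmeasure s t T x = distr (density (P s x) (\<lambda>\<omega>. ennreal (Z s T \<omega>) / mass s T x)) SE (X t)"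

lemma sets_Kmeasure: "sets (Kmeasure s t T x) = sets SE" unfolding Kmeasure_def by simp

lemma space_Kmeasure: "space (Kmeasure s t T x) = space SE" unfolding Kmeasure_def by simp

lemma Kop_measurable:
  assumes times: "s \<in> I" "t \<in> I" "T \<in> I" "s \<le> t" "t \<le> T" and g: "g \<in> borel_measurable SE"
  shows "Kop X P Z s t T g \<in> borel_measurable SE"
proof -
  have [measurable]: "Z s T \<in> borel_measurable M" using times by (intro Z_measurable) auto
  have [measurable]: "X t \<in> measurable M SE" using times by (intro X_measurable) auto
  have [measurable]: "mass s T \<in> borel_measurable SE" using times by (intro mass_measurable) auto
  have [measurable]: "(\<lambda>x. \<integral>\<^sup>+\<omega>. g (X t \<omega>) * ennreal (Z s T \<omega>) \<partial>P s x) \<in> borel_measurable SE"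
    using times g by (intro expectation_measurable) auto
  show ?thesis unfolding Kop_def mass_def[symmetric] by measurable
qed

lemma nn_integral_Kmeasure:
  assumes times: "s \<in> I" "t \<in> I" "T \<in> I" "s \<le> t" "t \<le> T" and x: "x \<in> space SE"
    and g: "g \<in> borel_measurable SE"
  shows "(\<integral>\<^sup>+y. g y \<partial>Kmeasure s t T x) = Kop X P Z s t T g x"
proof -
  have meas_P: "borel_measurable (P s x) = borel_measurable M" using borel_measurable_P times x by auto
  have X_t: "X t \<in> measurable (P s x) SE"
    using X_measurable[OF times(2)] measurable_cong_sets[OF sets_P[OF times(1) x] refl] by blast
  have [measurable]: "Z s T \<in> borel_measurable M" "X t \<in> measurable M SE"
    using times by (auto intro: Z_measurable X_measurable)
  have "(\<integral>\<^sup>+y. g y \<partial>Kmeasure s t T x) = (\<integral>\<^sup>+\<omega>. g (X t \<omega>) \<partial>density (P s x) (\<lambda>\<omega>. ennreal (Z s T \<omega>) / mass s T x))"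
    unfolding Kmeasure_def by (rule nn_integral_distr) (use X_t g in auto)
  also have "\<dots> = (\<integral>\<^sup>+\<omega>. ennreal (Z s T \<omega>) / mass s T x * g (X t \<omega>) \<partial>P s x)"
    by (rule nn_integral_density) (use g in \<open>auto simp: meas_P\<close>)
  also have "\<dots> = (\<integral>\<^sup>+\<omega>. g (X t \<omega>) * ennreal (Z s T \<omega>) / mass s T x \<partial>P s x)"
    by (metis ennreal_divide_times ennreal_times_divide mult.commute)
  also have "\<dots> = (\<integral>\<^sup>+\<omega>. g (X t \<omega>) * ennreal (Z s T \<omega>) \<partial>P s x) / mass s T x"
    by (rule nn_integral_divide) (use g in \<open>auto simp: meas_P\<close>)
  finally show ?thesis unfolding Kop_def mass_def .
qed

lemma emeasure_Kmeasure:
  assumes times: "s \<in> I" "t \<in> I" "T \<in> I" "s \<le> t" "t \<le> T" and x: "x \<in> space SE" and A: "A \<in> sets SE"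
  shows "emeasure (Kmeasure s t T x) A = Kop X P Z s t T (indicator A) x"
  using nn_integral_Kmeasure[OF times x, of "indicator A"] A by (simp add: sets_Kmeasure)

lemma prob_space_Kmeasure:
  assumes times: "s \<in> I" "t \<in> I" "T \<in> I" "s \<le> t" "t \<le> T" and x: "x \<in> space SE"
  shows "prob_space (Kmeasure s t T x)"
proof
  have space: "space (P s x) = space M" using space_P times x by auto
  have "emeasure (Kmeasure s t T x) (space SE) = Kop X P Z s t T (indicator (space SE)) x"
    by (rule emeasure_Kmeasure[OF times x]) simp
  also have "\<dots> = mass s T x / mass s T x"
    unfolding Kop_def mass_def
    by (rule arg_cong2[where f="(/)"], rule nn_integral_cong)
      (use measurable_space[OF X_measurable[OF times(2)]] space in auto)
  also have "\<dots> = 1" using mass_pos[OF times(1,3) _ x] mass_finite[OF times(1,3) _ x] times by simp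
  finally show "emeasure (Kmeasure s t T x) (space (Kmeasure s t T x)) = 1" by (simp add: space_Kmeasure)
qed

lemma Kmeasure_measurable:
  assumes times: "s \<in> I" "t \<in> I" "T \<in> I" "s \<le> t" "t \<le> T"
  shows "Kmeasure s t T \<in> measurable SE (prob_algebra SE)"
proof (rule measurable_prob_algebraI)
  show "\<And>x. x \<in> space SE \<Longrightarrow> prob_space (Kmeasure s t T x)" using prob_space_Kmeasure times by blast
  show "Kmeasure s t T \<in> SE \<rightarrow>\<^sub>M subprob_algebra SE"
  proof (rule measurable_subprob_algebra)
    show "\<And>a. a \<in> space SE \<Longrightarrow> subprob_space (Kmeasure s t T a)"
      using prob_space_Kmeasure times prob_space_imp_subprob_space by blast
    show "\<And>a. a \<in> space SE \<Longrightarrow> sets (Kmeasure s t T a) = sets SE" by (rule sets_Kmeasure)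
    fix A assume A: "A \<in> sets SE"
    have "(\<lambda>a. emeasure (Kmeasure s t T a) A) \<in> borel_measurable SE \<longleftrightarrow> Kop X P Z s t T (indicator A) \<in> borel_measurable SE"
      by (rule measurable_cong) (use emeasure_Kmeasure[OF times _ A] in auto)
    then show "(\<lambda>a. emeasure (Kmeasure s t T a) A) \<in> borel_measurable SE"
      using Kop_measurable[OF times, of "indicator A"] A by simp
  qed
qed

lemma Kop_times_mass:
  assumes "s \<in> I" "T \<in> I" "s \<le> T" "x \<in> space SE"
  shows "Kop X P Z s t T f x * mass s T x = (\<integral>\<^sup>+\<omega>. f (X t \<omega>) * ennreal (Z s T \<omega>) \<partial>P s x)"
  unfolding Kop_def mass_def[symmetric]
  using mass_pos[OF assms] mass_finite[OF assms] by (simp add: ennreal_divide_times)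

lemma conditioning_at_intermediate_time:
  assumes times: "s \<in> I" "u \<in> I" "t \<in> I" "T \<in> I" "s \<le> u" "u \<le> t" "t \<le> T"
    and x: "x \<in> space SE" and f: "f \<in> borel_measurable SE"
  shows "(\<integral>\<^sup>+\<omega>. f (X t \<omega>) * ennreal (Z s T \<omega>) \<partial>P s x)
       = (\<integral>\<^sup>+\<omega>. Kop X P Z u t T f (X u \<omega>) * ennreal (Z s T \<omega>) \<partial>P s x)"
proof -
  have [measurable]: "Z s u \<in> borel_measurable (F s u)" "Z u T \<in> borel_measurable (F u T)"
    "X t \<in> measurable (F u T) SE" "X u \<in> measurable (F s u) SE" "f \<in> borel_measurable SE"
    "Kop X P Z u t T f \<in> borel_measurable SE"
    using times f by (auto intro: Z_measurable_F X_measurable_F Kop_measurable)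
  have Z_split: "ennreal (Z s T \<omega>) = ennreal (Z s u \<omega>) * ennreal (Z u T \<omega>)" for \<omega>
    using times by (intro ennreal_Z_mult) auto
  have X_u: "X u \<omega> \<in> space SE" if "\<omega> \<in> space (P s x)" for \<omega>
    using measurable_space[OF X_measurable[OF times(2)]] space_P[OF times(1) x] that by blast
  have "(\<integral>\<^sup>+\<omega>. f (X t \<omega>) * ennreal (Z s T \<omega>) \<partial>P s x)
      = (\<integral>\<^sup>+\<omega>. ennreal (Z s u \<omega>) * (f (X t \<omega>) * ennreal (Z u T \<omega>)) \<partial>P s x)"
    by (simp add: Z_split ac_simps)
  also have "\<dots> = (\<integral>\<^sup>+\<omega>. ennreal (Z s u \<omega>)
                         * (\<integral>\<^sup>+\<omega>'. f (X t \<omega>') * ennreal (Z u T \<omega>') \<partial>P u (X u \<omega>)) \<partial>P s x)"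
    using times x by (intro markov_property_nn[where t=T]) auto
  also have "\<dots> = (\<integral>\<^sup>+\<omega>. (ennreal (Z s u \<omega>) * Kop X P Z u t T f (X u \<omega>))
                         * (\<integral>\<^sup>+\<omega>'. ennreal (Z u T \<omega>') \<partial>P u (X u \<omega>)) \<partial>P s x)"
    using Kop_times_mass[OF times(2,4) _ X_u, where t=t and f=f] times
    by (intro nn_integral_cong) (simp add: mass_def mult.assoc)
  also have "\<dots> = (\<integral>\<^sup>+\<omega>. (ennreal (Z s u \<omega>) * Kop X P Z u t T f (X u \<omega>)) * ennreal (Z u T \<omega>) \<partial>P s x)"
    using times x by (intro markov_property_nn[where t=T, symmetric]) auto
  also have "\<dots> = (\<integral>\<^sup>+\<omega>. Kop X P Z u t T f (X u \<omega>) * ennreal (Z s T \<omega>) \<partial>P s x)"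
    by (simp add: Z_split ac_simps)
  finally show ?thesis .
qed

lemma Kmeasure_comp:
  assumes times: "s \<in> I" "u \<in> I" "t \<in> I" "T \<in> I" "s \<le> u" "u \<le> t" "t \<le> T" and x: "x \<in> space SE"
  shows "Kmeasure s t T x = bind (Kmeasure s u T x) (Kmeasure u t T)"
proof (rule measure_eqI)
  have ne: "space (Kmeasure s u T x) \<noteq> {}"
    using prob_space_Kmeasure[of s u T x] times x prob_space.not_empty by auto
  have K: "Kmeasure u t T \<in> measurable SE (subprob_algebra SE)"
    using Kmeasure_measurable[of u t T] times measurable_prob_algebraD by auto
  have K_comp: "Kmeasure u t T \<in> measurable (Kmeasure s u T x) (subprob_algebra SE)"
    using K measurable_cong_sets[OF sets_Kmeasure refl] by blast
  show "sets (Kmeasure s t T x) = sets (bind (Kmeasure s u T x) (Kmeasure u t T))"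
    by (subst sets_bind[OF _ ne]) (auto simp: sets_Kmeasure space_Kmeasure)
  fix A assume "A \<in> sets (Kmeasure s t T x)"
  then have A: "A \<in> sets SE" by (simp add: sets_Kmeasure)
  have "emeasure (bind (Kmeasure s u T x) (Kmeasure u t T)) A = (\<integral>\<^sup>+y. emeasure (Kmeasure u t T y) A \<partial>Kmeasure s u T x)"
    by (rule emeasure_bind[OF ne K_comp A])
  also have "\<dots> = (\<integral>\<^sup>+y. Kop X P Z u t T (indicator A) y \<partial>Kmeasure s u T x)"
    by (rule nn_integral_cong) (use emeasure_Kmeasure[OF _ _ _ _ _ _ A] times in \<open>auto simp: space_Kmeasure\<close>)
  also have "\<dots> = Kop X P Z s u T (Kop X P Z u t T (indicator A)) x"
    by (rule nn_integral_Kmeasure) (use times x A Kop_measurable[of u t T "indicator A"] in auto)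
  also have "\<dots> = Kop X P Z s t T (indicator A) x"
  proof -
    have "(\<integral>\<^sup>+\<omega>. Kop X P Z u t T (indicator A) (X u \<omega>) * ennreal (Z s T \<omega>) \<partial>P s x)
        = (\<integral>\<^sup>+\<omega>. indicator A (X t \<omega>) * ennreal (Z s T \<omega>) \<partial>P s x)"
      by (rule conditioning_at_intermediate_time[OF times x, symmetric]) (use A in auto)
    then show ?thesis
      unfolding Kop_def[of X P Z s u T "Kop X P Z u t T (indicator A)" x] Kop_def[of X P Z s t T "indicator A" x]
      by simp
  qed
  also have "\<dots> = emeasure (Kmeasure s t T x) A"
    using emeasure_Kmeasure[OF _ _ _ _ _ x A] times by auto
  finally show "emeasure (Kmeasure s t T x) A = emeasure (bind (Kmeasure s u T x) (Kmeasure u t T)) A" ..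
qed

lemma Emu_return:
  assumes "q \<in> I" "x \<in> space SE" "G \<in> borel_measurable M"
  shows "Emu P q (return SE x) G = (\<integral>\<^sup>+\<omega>. G \<omega> \<partial>P q x)"
  unfolding Emu_def by (rule nn_integral_return[OF assms(2) expectation_measurable[OF assms(1,3)]])

lemma Phi_return_eq_Kmeasure:
  assumes times: "q \<in> I" "r \<in> I" "q \<le> r" and x: "x \<in> space SE"
  shows "Phi SE X P Z q r (return SE x) = Kmeasure q r r x"
  unfolding Phi_def
proof (rule measure_of_eq_measure)
  show "sets (Kmeasure q r r x) = sets SE" by (rule sets_Kmeasure)
  fix A assume A: "A \<in> sets SE"
  have [measurable]: "Z q r \<in> borel_measurable M" using times by (intro Z_measurable) auto
  have [measurable]: "X r \<in> measurable M SE" using times by (intro X_measurable) auto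
  have [measurable]: "A \<in> sets SE" by (rule A)
  have "Emu P q (return SE x) (\<lambda>\<omega>. indicator A (X r \<omega>) * ennreal (Z q r \<omega>)) / Emu P q (return SE x) (\<lambda>\<omega>. ennreal (Z q r \<omega>))
      = (\<integral>\<^sup>+\<omega>. indicator A (X r \<omega>) * ennreal (Z q r \<omega>) \<partial>P q x) / (\<integral>\<^sup>+\<omega>. ennreal (Z q r \<omega>) \<partial>P q x)"
    by (subst Emu_return[OF times(1) x], measurable)+
  also have "\<dots> = emeasure (Kmeasure q r r x) A"
    using emeasure_Kmeasure[OF times(1,2,2) times(3) order_refl x A] unfolding Kop_def by simp
  finally show "Emu P q (return SE x) (\<lambda>\<omega>. indicator A (X r \<omega>) * ennreal (Z q r \<omega>)) / Emu P q (return SE x) (\<lambda>\<omega>. ennreal (Z q r \<omega>))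
      = emeasure (Kmeasure q r r x) A" .
qed

lemma muK_eq_bind:
  assumes times: "s \<in> I" "t \<in> I" "T \<in> I" "s \<le> t" "t \<le> T" and mu: "prob_space \<mu>" "sets \<mu> = sets SE"
  shows "muK SE X P Z s t T \<mu> = bind \<mu> (Kmeasure s t T)"
  unfolding muK_def
proof (rule measure_of_eq_measure)
  have \<mu>_prob: "\<mu> \<in> space (prob_algebra SE)" using mu by (simp add: space_prob_algebra)
  have K: "Kmeasure s t T \<in> SE \<rightarrow>\<^sub>M prob_algebra SE" using Kmeasure_measurable[OF times] .
  show "sets (bind \<mu> (Kmeasure s t T)) = sets SE" by (rule sets_bind'[OF \<mu>_prob K])
  fix A assume A: "A \<in> sets SE"
  have space: "space \<mu> = space SE" using mu(2) sets_eq_imp_space_eq by blast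
  have "(\<integral>\<^sup>+x. Kop X P Z s t T (indicator A) x \<partial>\<mu>) = (\<integral>\<^sup>+x. emeasure (Kmeasure s t T x) A \<partial>\<mu>)"
    by (rule nn_integral_cong) (use emeasure_Kmeasure[OF times _ A] space in auto)
  also have "\<dots> = emeasure (bind \<mu> (Kmeasure s t T)) A"
    by (rule emeasure_bind_prob_algebra[OF \<mu>_prob K A, symmetric])
  finally show "(\<integral>\<^sup>+x. Kop X P Z s t T (indicator A) x \<partial>\<mu>) = emeasure (bind \<mu> (Kmeasure s t T)) A" .
qed

lemma Phi_eq_bind_density:
  assumes times: "s \<in> I" "t \<in> I" "s \<le> t" and \<mu>: "prob_space \<mu>" "sets \<mu> = sets SE"
  defines "c \<equiv> \<integral>\<^sup>+x. mass s t x \<partial>\<mu>"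
  assumes \<mu>': "prob_space (density \<mu> (\<lambda>x. mass s t x / c))"
  shows "Phi SE X P Z s t \<mu> = bind (density \<mu> (\<lambda>x. mass s t x / c)) (Kmeasure s t t)"
  unfolding Phi_def
proof (rule measure_of_eq_measure)
  define \<mu>' where "\<mu>' = density \<mu> (\<lambda>x. mass s t x / c)"
  have space: "space \<mu> = space SE" "space \<mu>' = space SE"
    using \<mu>(2) sets_eq_imp_space_eq unfolding \<mu>'_def by auto
  have \<mu>'_prob: "\<mu>' \<in> space (prob_algebra SE)"
    using \<mu>' \<mu>(2) unfolding \<mu>'_def by (simp add: space_prob_algebra)
  have K: "Kmeasure s t t \<in> SE \<rightarrow>\<^sub>M prob_algebra SE"
    using times by (intro Kmeasure_measurable) auto
  show "sets (bind \<mu>' (Kmeasure s t t)) = sets SE" by (rule sets_bind'[OF \<mu>'_prob K])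
  fix A assume A[measurable]: "A \<in> sets SE"
  have [measurable]: "Z s t \<in> borel_measurable M" "X t \<in> measurable M SE"
    using times by (auto intro: Z_measurable X_measurable)
  define E where "E x = (\<integral>\<^sup>+\<omega>. indicator A (X t \<omega>) * ennreal (Z s t \<omega>) \<partial>P s x)" for x
  have "E \<in> borel_measurable SE"
    unfolding E_def using times(1) by (rule expectation_measurable) measurable
  then have E: "E \<in> borel_measurable \<mu>"
    using \<mu>(2) measurable_cong_sets by blast
  have mass: "mass s t \<in> borel_measurable \<mu>"
    using mass_measurable[OF times] \<mu>(2) measurable_cong_sets by blast
  have "emeasure (bind \<mu>' (Kmeasure s t t)) A = (\<integral>\<^sup>+x. emeasure (Kmeasure s t t x) A \<partial>\<mu>')"
    by (rule emeasure_bind_prob_algebra[OF \<mu>'_prob K A])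
  also have "\<dots> = (\<integral>\<^sup>+x. E x / mass s t x \<partial>\<mu>')"
    by (rule nn_integral_cong)
       (use emeasure_Kmeasure[OF times(1,2,2,3) order_refl _ A] space in \<open>auto simp: Kop_def E_def mass_def\<close>)
  also have "\<dots> = (\<integral>\<^sup>+x. mass s t x / c * (E x / mass s t x) \<partial>\<mu>)"
    unfolding \<mu>'_def by (rule nn_integral_density) (use mass E in auto)
  also have "\<dots> = (\<integral>\<^sup>+x. E x / c \<partial>\<mu>)"
  proof (rule nn_integral_cong)
    fix x assume "x \<in> space \<mu>"
    then have x: "x \<in> space SE" using space by simp
    have "mass s t x \<noteq> 0" "mass s t x < \<infinity>"
      using mass_pos[OF times x] mass_finite[OF times x] by auto
    then have "E x / mass s t x * mass s t x = E x"
      by (simp add: ennreal_divide_times)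
    moreover have "mass s t x / c * (E x / mass s t x) = E x / mass s t x * mass s t x / c"
      by (simp add: divide_ennreal_def ac_simps)
    ultimately show "mass s t x / c * (E x / mass s t x) = E x / c"
      by simp
  qed
  also have "\<dots> = (\<integral>\<^sup>+x. E x \<partial>\<mu>) / c"
    by (rule nn_integral_divide[OF E])
  finally show "Emu P s \<mu> (\<lambda>\<omega>. indicator A (X t \<omega>) * ennreal (Z s t \<omega>)) / Emu P s \<mu> (\<lambda>\<omega>. ennreal (Z s t \<omega>))
      = emeasure (bind \<mu>' (Kmeasure s t t)) A"
    unfolding Emu_def c_def E_def mass_def by simp
qed

lemma Phi_eq_bind:
  assumes times: "s \<in> I" "t \<in> I" "s \<le> t" and \<mu>: "prob_space \<mu>" "sets \<mu> = sets SE"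
  obtains \<nu> where "prob_space \<nu>" "sets \<nu> = sets SE" "Phi SE X P Z s t \<mu> = bind \<nu> (Kmeasure s t t)"
proof
  interpret prob_space \<mu> by fact
  have space: "space \<mu> = space SE" using \<mu>(2) sets_eq_imp_space_eq by blast
  have meas: "mass s t \<in> borel_measurable \<mu>"
    using mass_measurable[OF times] \<mu>(2) measurable_cong_sets by blast
  have "(\<integral>\<^sup>+x. mass s t x \<partial>\<mu>) \<le> (\<integral>\<^sup>+x. sup_mass s t \<partial>\<mu>)"
    using mass_le_sup_mass space by (intro nn_integral_mono) auto
  also have "\<dots> < \<infinity>"
    using sup_mass_finite[OF times] by (simp add: emeasure_space_1)
  finally show "prob_space (density \<mu> (\<lambda>x. mass s t x / (\<integral>\<^sup>+x. mass s t x \<partial>\<mu>)))"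
    using mass_pos[OF times] space by (intro prob_space_density_normalized[OF \<mu>(1) meas]) auto
  then show "Phi SE X P Z s t \<mu>
      = bind (density \<mu> (\<lambda>x. mass s t x / (\<integral>\<^sup>+x. mass s t x \<partial>\<mu>))) (Kmeasure s t t)"
    by (rule Phi_eq_bind_density[OF times \<mu>])
qed (use \<mu> in simp)

text \<open>Split Z_{q,T} = Z_{q,r} Z_{r,T} and condition on the process at time r.\<close>
lemma emeasure_Kmeasure_reweighted:
  assumes times: "q \<in> I" "r \<in> I" "T \<in> I" "q \<le> r" "r \<le> T" and z: "z \<in> space SE"
    and B: "B \<in> sets SE"
  shows "emeasure (Kmeasure q r T z) B
       = (\<integral>\<^sup>+v. mass r T v * indicator B v \<partial>Kmeasure q r r z) / (\<integral>\<^sup>+v. mass r T v \<partial>Kmeasure q r r z)"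
proof -
  have [measurable]: "Z q r \<in> borel_measurable (F q r)" "Z r T \<in> borel_measurable (F r T)"
    "X r \<in> measurable (F q r) SE" "mass r T \<in> borel_measurable SE"
    using times by (auto intro: Z_measurable_F X_measurable_F mass_measurable)
  have mass_qr: "mass q r z \<noteq> 0" "mass q r z < \<infinity>"
    using mass_pos[OF times(1,2,4) z] mass_finite[OF times(1,2,4) z] by auto
  have weighted: "(\<integral>\<^sup>+\<omega>. indicator C (X r \<omega>) * ennreal (Z q T \<omega>) \<partial>P q z)
      = (\<integral>\<^sup>+v. mass r T v * indicator C v \<partial>Kmeasure q r r z) * mass q r z"
    if [measurable]: "C \<in> sets SE" for C
  proof -
    have "(\<integral>\<^sup>+\<omega>. indicator C (X r \<omega>) * ennreal (Z q T \<omega>) \<partial>P q z)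
        = (\<integral>\<^sup>+\<omega>. (indicator C (X r \<omega>) * ennreal (Z q r \<omega>)) * ennreal (Z r T \<omega>) \<partial>P q z)"
      using times by (simp add: ennreal_Z_mult[of q r T] ac_simps)
    also have "\<dots> = (\<integral>\<^sup>+\<omega>. (indicator C (X r \<omega>) * ennreal (Z q r \<omega>))
                              * (\<integral>\<^sup>+\<omega>'. ennreal (Z r T \<omega>') \<partial>P r (X r \<omega>)) \<partial>P q z)"
      using times z by (intro markov_property_nn[where t=T]) auto
    also have "\<dots> = (\<integral>\<^sup>+\<omega>. (mass r T (X r \<omega>) * indicator C (X r \<omega>)) * ennreal (Z q r \<omega>) \<partial>P q z)"
      by (simp add: mass_def ac_simps)
    also have "\<dots> = Kop X P Z q r r (\<lambda>v. mass r T v * indicator C v) z * mass q r z"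
      by (rule Kop_times_mass[OF times(1,2,4) z, symmetric])
    also have "Kop X P Z q r r (\<lambda>v. mass r T v * indicator C v) z
             = (\<integral>\<^sup>+v. mass r T v * indicator C v \<partial>Kmeasure q r r z)"
      using times z by (intro nn_integral_Kmeasure[symmetric]) auto
    finally show ?thesis .
  qed
  have "mass q T z = (\<integral>\<^sup>+\<omega>. indicator (space SE) (X r \<omega>) * ennreal (Z q T \<omega>) \<partial>P q z)"
    using measurable_space[OF X_measurable[OF times(2)]] space_P[OF times(1) z]
    unfolding mass_def by (intro nn_integral_cong) auto
  also have "\<dots> = (\<integral>\<^sup>+v. mass r T v \<partial>Kmeasure q r r z) * mass q r z"
    unfolding weighted[OF sets.top]
    by (rule arg_cong2[where f="(*)"], rule nn_integral_cong) (auto simp: space_Kmeasure)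
  finally have "mass q T z = (\<integral>\<^sup>+v. mass r T v \<partial>Kmeasure q r r z) * mass q r z" .
  then show ?thesis
    using emeasure_Kmeasure[OF times z B] weighted[OF B] mass_qr
    unfolding Kop_def mass_def[symmetric] by (simp add: divide_mult_eq)
qed

section \<open>Minorisation of the one-step kernels\<close>

lemma nu_meas_minorant:
  assumes times: "r - 1 \<in> I" "r \<in> I" and x: "x \<in> space SE" and y: "y \<in> space SE"
  shows "sets (nu_meas SE X P Z r x y) = sets SE"
    and "nu_meas SE X P Z r x y \<le> Kmeasure (r - 1) r r x"
    and "nu_meas SE X P Z r x y \<le> Kmeasure (r - 1) r r y"
proof -
  let ?K = "\<lambda>z. Kmeasure (r - 1) r r z"
  have eq: "nu_meas SE X P Z r x y = min_measure SE (?K x) (?K y)"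
    unfolding nu_meas_def using times x y by (simp add: Phi_return_eq_Kmeasure)
  have "finite_measure (?K z)" if "z \<in> space SE" for z
    using prob_space_Kmeasure[of "r - 1" r r z] times that unfolding prob_space_def by auto
  note minorant = min_measure_minorant[OF this[OF x] this[OF y] sets_Kmeasure sets_Kmeasure]
  show "sets (nu_meas SE X P Z r x y) = sets SE"
    unfolding eq by (rule minorant(1))
  show "nu_meas SE X P Z r x y \<le> ?K x" "nu_meas SE X P Z r x y \<le> ?K y"
    unfolding eq using minorant by (auto simp: le_measure sets_Kmeasure)
qed

text \<open>Its total mass is the ratio minimised in d_r, at time horizon T - r.\<close>
definition common_minorant :: "real \<Rightarrow> real \<Rightarrow> 'e \<Rightarrow> 'e \<Rightarrow> 'e measure" where
  "common_minorant r T x y = density (nu_meas SE X P Z r x y) (\<lambda>v. mass r T v / sup_mass r T)"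

lemma emeasure_common_minorant:
  assumes times: "r - 1 \<in> I" "r \<in> I" "T \<in> I" "r \<le> T" and x: "x \<in> space SE" and y: "y \<in> space SE"
    and B: "B \<in> sets SE"
  shows "emeasure (common_minorant r T x y) B
       = (\<integral>\<^sup>+v. mass r T v * indicator B v \<partial>nu_meas SE X P Z r x y) / sup_mass r T"
proof -
  have [measurable]: "mass r T \<in> borel_measurable SE"
    using times by (intro mass_measurable) auto
  show ?thesis
    unfolding common_minorant_def using B nu_meas_minorant(1)[OF times(1,2) x y]
    by (simp add: emeasure_density nn_integral_divide[symmetric] ennreal_times_divide mult.commute)
qed

text \<open>In the reweighting formula for K^T_{r-1,r}(z,-) the numerator only decreases when
  K^r_{r-1,r}(z,-) = \<Phi>_{r-1,r}(\<delta>_z) is replaced by its minorant \<nu>_{r,x,y}, and the normaliser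
  is at most sup_v E_{r,v}(Z_{r,T}).\<close>
lemma common_minorant_le_Kmeasure:
  assumes times: "r - 1 \<in> I" "r \<in> I" "T \<in> I" "r \<le> T" and x: "x \<in> space SE" and y: "y \<in> space SE"
    and z: "z = x \<or> z = y" and B: "B \<in> sets SE"
  shows "emeasure (common_minorant r T x y) B \<le> emeasure (Kmeasure (r - 1) r T z) B"
proof -
  let ?K = "Kmeasure (r - 1) r r z"
  have z_space: "z \<in> space SE" using z x y by auto
  have "nu_meas SE X P Z r x y \<le> ?K"
    using z nu_meas_minorant[OF times(1,2) x y] by auto
  then have "(\<integral>\<^sup>+v. mass r T v * indicator B v \<partial>nu_meas SE X P Z r x y)
           \<le> (\<integral>\<^sup>+v. mass r T v * indicator B v \<partial>?K)"
    using nu_meas_minorant(1)[OF times(1,2) x y] by (intro nn_integral_mono_measure) (auto simp: sets_Kmeasure)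
  moreover have "(\<integral>\<^sup>+v. mass r T v \<partial>?K) \<le> sup_mass r T"
  proof -
    have "(\<integral>\<^sup>+v. mass r T v \<partial>?K) \<le> (\<integral>\<^sup>+v. sup_mass r T \<partial>?K)"
      using mass_le_sup_mass by (intro nn_integral_mono) (auto simp: space_Kmeasure)
    then show ?thesis
      using prob_space.emeasure_space_1[OF prob_space_Kmeasure[of "r - 1" r r z]] times z_space
      by (simp add: space_Kmeasure)
  qed
  ultimately show ?thesis
    using emeasure_Kmeasure_reweighted[of "r - 1" r T z B] times z_space B
    by (simp add: emeasure_common_minorant[OF times x y B] ennreal_divide_mono)
qed

lemma d_coef_le_common_minorant:
  assumes times: "r - 1 \<in> I" "r \<in> I" "T \<in> I" "r \<le> T" and x: "x \<in> space SE" and y: "y \<in> space SE"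
  shows "d_coef I SE X P Z r \<le> measure (common_minorant r T x y) (space SE)"
proof -
  let ?m = "common_minorant r T x y"
  have "space (nu_meas SE X P Z r x y) = space SE"
    using nu_meas_minorant(1)[OF times(1,2) x y] sets_eq_imp_space_eq by blast
  then have mass_m: "emeasure ?m (space SE)
      = Emu P r (nu_meas SE X P Z r x y) (\<lambda>\<omega>. ennreal (Z r (r + (T - r)) \<omega>))
        / (SUP x\<in>space SE. \<integral>\<^sup>+\<omega>. ennreal (Z r (r + (T - r)) \<omega>) \<partial>P r x)"
    unfolding emeasure_common_minorant[OF times x y sets.top] Emu_def sup_mass_def mass_def
    by (auto intro!: arg_cong2[where f="(/)"] nn_integral_cong)
  have "(INF t\<in>{t. 0 \<le> t \<and> r + t \<in> I}. INF x1\<in>space SE. INF x2\<in>space SE.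
          Emu P r (nu_meas SE X P Z r x1 x2) (\<lambda>\<omega>. ennreal (Z r (r + t) \<omega>))
          / (SUP x\<in>space SE. \<integral>\<^sup>+\<omega>. ennreal (Z r (r + t) \<omega>) \<partial>P r x))
        \<le> emeasure ?m (space SE)"
    unfolding mass_m using times x y by (intro INF_lower2[of "T - r"] INF_lower2[OF x] INF_lower2[OF y]) auto
  moreover have "emeasure ?m (space SE) < \<infinity>"
  proof -
    have "emeasure ?m (space SE) \<le> emeasure (Kmeasure (r - 1) r T x) (space SE)"
      using times x y by (intro common_minorant_le_Kmeasure) auto
    also have "\<dots> = 1"
      using prob_space.emeasure_space_1[OF prob_space_Kmeasure[of "r - 1" r T x]] times x
      by (simp add: space_Kmeasure)
    finally show ?thesis by (simp add: le_less_trans)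
  qed
  ultimately show ?thesis
    unfolding d_coef_def measure_def by (intro enn2real_mono) auto
qed

lemma Kmeasure_oscillation_le:
  assumes times: "r - 1 \<in> I" "r \<in> I" "T \<in> I" "r \<le> T" and x: "x \<in> space SE" and y: "y \<in> space SE"
    and A: "A \<in> sets SE"
  shows "measure (Kmeasure (r - 1) r T x) A - measure (Kmeasure (r - 1) r T y) A \<le> 1 - d_coef I SE X P Z r"
proof -
  have "prob_space (Kmeasure (r - 1) r T z)" if "z \<in> space SE" for z
    using times that by (intro prob_space_Kmeasure) auto
  moreover have "sets (common_minorant r T x y) = sets SE"
    using nu_meas_minorant(1)[OF times(1,2) x y] by (simp add: common_minorant_def)
  ultimately have "measure (Kmeasure (r - 1) r T x) A - measure (Kmeasure (r - 1) r T y) A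
      \<le> 1 - measure (common_minorant r T x y) (space SE)"
    using x y common_minorant_le_Kmeasure[OF times x y]
    by (intro measure_diff_le_one_minus_minorant[OF _ sets_Kmeasure _ sets_Kmeasure _ A]) auto
  then show ?thesis
    using d_coef_le_common_minorant[OF times x y] by linarith
qed

lemma d_coef_le_1:
  assumes "r - 1 \<in> I" "r \<in> I" "T \<in> I" "r \<le> T" and "space SE \<noteq> {}"
  shows "d_coef I SE X P Z r \<le> 1"
proof -
  obtain x where x: "x \<in> space SE" using assms(5) by auto
  show ?thesis using Kmeasure_oscillation_le[OF assms(1-4) x x, of "{}"] by simp
qed

section \<open>Contraction over several steps\<close>

lemma bind_Kmeasure_split:
  assumes \<nu>: "prob_space \<nu>" "sets \<nu> = sets SE"
    and times: "s \<in> I" "q \<in> I" "u \<in> I" "T \<in> I" "s \<le> q" "q \<le> u" "u \<le> T"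
  shows "bind \<nu> (Kmeasure s u T) = bind (bind \<nu> (Kmeasure s q T)) (Kmeasure q u T)"
proof -
  have space: "space \<nu> = space SE" using \<nu>(2) sets_eq_imp_space_eq by blast
  have "Kmeasure s q T \<in> measurable \<nu> (subprob_algebra SE)"
    using measurable_prob_algebraD[OF Kmeasure_measurable[of s q T]] times
      measurable_cong_sets[OF \<nu>(2) refl] by auto
  moreover have "Kmeasure q u T \<in> measurable SE (subprob_algebra SE)"
    using measurable_prob_algebraD[OF Kmeasure_measurable[of q u T]] times by auto
  ultimately have "bind (bind \<nu> (Kmeasure s q T)) (Kmeasure q u T)
      = bind \<nu> (\<lambda>x. bind (Kmeasure s q T x) (Kmeasure q u T))"
    by (rule bind_assoc)
  also have "\<dots> = bind \<nu> (Kmeasure s u T)"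
    using Kmeasure_comp[OF times] space by (intro bind_cong) auto
  finally show ?thesis ..
qed

lemma prob_space_bind_Kmeasure:
  assumes \<nu>: "prob_space \<nu>" "sets \<nu> = sets SE"
    and times: "s \<in> I" "t \<in> I" "T \<in> I" "s \<le> t" "t \<le> T"
  shows "prob_space (bind \<nu> (Kmeasure s t T))" "sets (bind \<nu> (Kmeasure s t T)) = sets SE"
proof -
  have "\<nu> \<in> space (prob_algebra SE)" using \<nu> by (simp add: space_prob_algebra)
  then show "prob_space (bind \<nu> (Kmeasure s t T))" "sets (bind \<nu> (Kmeasure s t T)) = sets SE"
    using prob_space_bind' sets_bind' Kmeasure_measurable[OF times] by blast+
qed

lemma sup_diff_bind_Kmeasure_step:
  assumes n1: "prob_space \<nu>1" "sets \<nu>1 = sets SE" and n2: "prob_space \<nu>2" "sets \<nu>2 = sets SE"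
    and times: "s \<in> I" "u - 1 \<in> I" "u \<in> I" "T \<in> I" "s \<le> u - 1" "u \<le> T"
  shows "sup_diff SE (bind \<nu>1 (Kmeasure s u T)) (bind \<nu>2 (Kmeasure s u T))
    \<le> (1 - d_coef I SE X P Z u)
       * sup_diff SE (bind \<nu>1 (Kmeasure s (u - 1) T)) (bind \<nu>2 (Kmeasure s (u - 1) T))"
proof -
  have times': "s \<in> I" "u - 1 \<in> I" "T \<in> I" "s \<le> u - 1" "u - 1 \<le> T"
    using times by auto
  have step: "u - 1 \<le> u" by simp
  have K: "Kmeasure (u - 1) u T \<in> SE \<rightarrow>\<^sub>M prob_algebra SE"
    using times by (intro Kmeasure_measurable) auto
  show ?thesis
    unfolding bind_Kmeasure_split[OF n1 times(1,2,3,4,5) step times(6)]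
      bind_Kmeasure_split[OF n2 times(1,2,3,4,5) step times(6)]
    by (rule sup_diff_bind_le[OF prob_space_bind_Kmeasure[OF n1 times']
          prob_space_bind_Kmeasure[OF n2 times'] K Kmeasure_oscillation_le[OF times(2,3,4,6)]])
qed

lemma prod_one_minus_d_coef_nonneg:
  assumes times: "s \<in> I" "t \<in> I" "T \<in> I" "t \<le> T" and n: "real n \<le> t - s"
    and ne: "space SE \<noteq> {}"
  shows "0 \<le> (\<Prod>k\<in>{0..<n}. 1 - d_coef I SE X P Z (t - real k))"
proof (intro prod_nonneg ballI)
  fix k assume "k \<in> {0..<n}"
  then have "t - real k - 1 \<in> I" "t - real k \<in> I"
    using time_minus_nat[OF times(2), of "Suc k"] time_minus_nat[OF times(2), of k]
      time_nonneg[OF times(1)] n by (auto simp: algebra_simps)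
  then show "0 \<le> 1 - d_coef I SE X P Z (t - real k)"
    using d_coef_le_1[OF _ _ times(3) _ ne] times by simp
qed

lemma sup_diff_bind_Kmeasure_iterate:
  assumes n1: "prob_space \<nu>1" "sets \<nu>1 = sets SE" and n2: "prob_space \<nu>2" "sets \<nu>2 = sets SE"
    and times: "s \<in> I" "t \<in> I" "T \<in> I" "t \<le> T" and n: "real n \<le> t - s"
  shows "sup_diff SE (bind \<nu>1 (Kmeasure s t T)) (bind \<nu>2 (Kmeasure s t T))
    \<le> (\<Prod>k\<in>{0..<n}. 1 - d_coef I SE X P Z (t - real k))
       * sup_diff SE (bind \<nu>1 (Kmeasure s (t - real n) T)) (bind \<nu>2 (Kmeasure s (t - real n) T))"
  using n
proof (induction n)
  case 0
  then show ?case by simp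
next
  case (Suc n)
  have ne: "space SE \<noteq> {}"
    using prob_space.not_empty[OF n1(1)] n1(2) sets_eq_imp_space_eq by metis
  define u where "u = t - real n"
  have u: "u \<in> I" "u - 1 \<in> I" "s \<le> u - 1" "u \<le> T"
    using time_minus_nat[OF times(2), of n] time_minus_nat[OF times(2), of "Suc n"]
      time_nonneg[OF times(1)] Suc.prems times unfolding u_def by (auto simp: algebra_simps)
  have "0 \<le> (\<Prod>k\<in>{0..<n}. 1 - d_coef I SE X P Z (t - real k))"
    using Suc.prems by (intro prod_one_minus_d_coef_nonneg[OF times _ ne]) simp
  then have "(\<Prod>k\<in>{0..<n}. 1 - d_coef I SE X P Z (t - real k))
        * sup_diff SE (bind \<nu>1 (Kmeasure s u T)) (bind \<nu>2 (Kmeasure s u T))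
      \<le> (\<Prod>k\<in>{0..<n}. 1 - d_coef I SE X P Z (t - real k)) * ((1 - d_coef I SE X P Z u)
        * sup_diff SE (bind \<nu>1 (Kmeasure s (u - 1) T)) (bind \<nu>2 (Kmeasure s (u - 1) T)))"
    using sup_diff_bind_Kmeasure_step[OF n1 n2 times(1) u(2,1) times(3) u(3,4)]
    by (rule mult_left_mono[rotated])
  then show ?case
    using Suc unfolding u_def by (simp add: prod.atLeast0_lessThan_Suc algebra_simps)
qed

lemma tv_norm_bind_Kmeasure_le:
  assumes n1: "prob_space \<nu>1" "sets \<nu>1 = sets SE" and n2: "prob_space \<nu>2" "sets \<nu>2 = sets SE"
    and times: "s \<in> I" "t \<in> I" "T \<in> I" "s \<le> t" "t \<le> T"
  shows "tv_norm SE (bind \<nu>1 (Kmeasure s t T)) (bind \<nu>2 (Kmeasure s t T))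
    \<le> (\<Prod>k\<in>{0..<nat \<lfloor>t - s\<rfloor>}. 1 - d_coef I SE X P Z (t - real k)) * tv_norm SE \<nu>1 \<nu>2"
proof -
  define n where "n = nat \<lfloor>t - s\<rfloor>"
  have ne: "space SE \<noteq> {}"
    using prob_space.not_empty[OF n1(1)] n1(2) sets_eq_imp_space_eq by metis
  have n: "real n \<le> t - s" unfolding n_def using times by linarith
  then have r: "t - real n \<in> I" "s \<le> t - real n"
    using time_minus_nat[OF times(2), of n] time_nonneg[OF times(1)] by auto
  have "sup_diff SE (bind \<nu>1 (Kmeasure s (t - real n) T)) (bind \<nu>2 (Kmeasure s (t - real n) T))
      \<le> sup_diff SE \<nu>1 \<nu>2"
    using times r by (intro sup_diff_bind_le_sup_diff[OF n1 n2] Kmeasure_measurable) auto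
  then have "sup_diff SE (bind \<nu>1 (Kmeasure s t T)) (bind \<nu>2 (Kmeasure s t T))
      \<le> (\<Prod>k\<in>{0..<n}. 1 - d_coef I SE X P Z (t - real k)) * sup_diff SE \<nu>1 \<nu>2"
    using sup_diff_bind_Kmeasure_iterate[OF n1 n2 times(1,2,3,5) n] ne
      prod_one_minus_d_coef_nonneg[OF times(1,2,3,5) n ne]
    by (meson mult_left_mono order_trans)
  then show ?thesis
    using n1 n2 times
    by (simp add: tv_norm_eq_twice_sup_diff prob_space_bind_Kmeasure n_def)
qed

lemma tv_norm_muK_le:
  assumes \<mu>1: "prob_space \<mu>1" "sets \<mu>1 = sets SE" and \<mu>2: "prob_space \<mu>2" "sets \<mu>2 = sets SE"
    and times: "s \<in> I" "t \<in> I" "T \<in> I" "s \<le> t" "t \<le> T"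
  shows "tv_norm SE (muK SE X P Z s t T \<mu>1) (muK SE X P Z s t T \<mu>2)
    \<le> (\<Prod>k\<in>{0..<nat \<lfloor>t - s\<rfloor>}. 1 - d_coef I SE X P Z (t - real k)) * tv_norm SE \<mu>1 \<mu>2"
  unfolding muK_eq_bind[OF times \<mu>1] muK_eq_bind[OF times \<mu>2]
  by (rule tv_norm_bind_Kmeasure_le[OF \<mu>1 \<mu>2 times])

lemma tv_norm_Phi_le:
  assumes \<mu>1: "prob_space \<mu>1" "sets \<mu>1 = sets SE" and \<mu>2: "prob_space \<mu>2" "sets \<mu>2 = sets SE"
    and times: "s \<in> I" "t \<in> I" "s \<le> t"
  shows "tv_norm SE (Phi SE X P Z s t \<mu>1) (Phi SE X P Z s t \<mu>2)
    \<le> 2 * (\<Prod>k\<in>{0..<nat \<lfloor>t - s\<rfloor>}. 1 - d_coef I SE X P Z (t - real k))"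
proof -
  define \<pi> where "\<pi> = (\<Prod>k\<in>{0..<nat \<lfloor>t - s\<rfloor>}. 1 - d_coef I SE X P Z (t - real k))"
  have "space SE \<noteq> {}"
    using prob_space.not_empty[OF \<mu>1(1)] sets_eq_imp_space_eq[OF \<mu>1(2)] by simp
  moreover have "real (nat \<lfloor>t - s\<rfloor>) \<le> t - s" using times by linarith
  ultimately have \<pi>_nonneg: "0 \<le> \<pi>"
    unfolding \<pi>_def by (intro prod_one_minus_d_coef_nonneg[OF times(1,2,2) order_refl])
  obtain \<nu>1 where \<nu>1: "prob_space \<nu>1" "sets \<nu>1 = sets SE" "Phi SE X P Z s t \<mu>1 = bind \<nu>1 (Kmeasure s t t)"
    using Phi_eq_bind[OF times \<mu>1] .
  obtain \<nu>2 where \<nu>2: "prob_space \<nu>2" "sets \<nu>2 = sets SE" "Phi SE X P Z s t \<mu>2 = bind \<nu>2 (Kmeasure s t t)"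
    using Phi_eq_bind[OF times \<mu>2] .
  have "tv_norm SE (Phi SE X P Z s t \<mu>1) (Phi SE X P Z s t \<mu>2) \<le> \<pi> * tv_norm SE \<nu>1 \<nu>2"
    unfolding \<nu>1(3) \<nu>2(3) \<pi>_def
    by (rule tv_norm_bind_Kmeasure_le[OF \<nu>1(1,2) \<nu>2(1,2) times(1,2,2,3) order_refl])
  also have "\<dots> \<le> \<pi> * 2"
    using sup_diff_le_1[OF \<nu>1(1) \<nu>2(1), of SE] \<pi>_nonneg
    by (simp add: tv_norm_eq_twice_sup_diff \<nu>1 \<nu>2 mult_left_le)
  finally show ?thesis
    unfolding \<pi>_def by (simp add: mult.commute)
qed

end

theorem theorem2p1:
  fixes I :: "real set" and SE :: "'e measure" and M :: "'w measure"
    and F :: "real \<Rightarrow> real \<Rightarrow> 'w measure" and X :: "real \<Rightarrow> 'w \<Rightarrow> 'e"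
    and P :: "real \<Rightarrow> 'e \<Rightarrow> 'w measure" and Z :: "real \<Rightarrow> real \<Rightarrow> 'w \<Rightarrow> real"
    and \<mu>1 \<mu>2 :: "'e measure" and s t T :: real
  assumes setting: "penalized_markov I SE M F X P Z"
    and mu1: "prob_space \<mu>1" "sets \<mu>1 = sets SE"
    and mu2: "prob_space \<mu>2" "sets \<mu>2 = sets SE"
    and times: "s \<in> I" "t \<in> I" "T \<in> I" "0 \<le> s" "s + 1 \<le> t" "t \<le> T"
  shows "tv_norm SE (muK SE X P Z s t T \<mu>1) (muK SE X P Z s t T \<mu>2)
           \<le> (\<Prod>k\<in>{0..<nat \<lfloor>t - s\<rfloor>}. 1 - d_coef I SE X P Z (t - real k)) * tv_norm SE \<mu>1 \<mu>2
       \<and> tv_norm SE (Phi SE X P Z s t \<mu>1) (Phi SE X P Z s t \<mu>2)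
           \<le> 2 * (\<Prod>k\<in>{0..<nat \<lfloor>t - s\<rfloor>}. 1 - d_coef I SE X P Z (t - real k))"
proof -
  interpret penalized_markov_setting I SE M F X P Z
    by (rule penalized_markov_setting.intro[OF setting])
  have st: "s \<le> t" using times by simp
  show ?thesis
    using tv_norm_muK_le[OF mu1 mu2 times(1-3) st times(6)] tv_norm_Phi_le[OF mu1 mu2 times(1,2) st]
    by blast
qed

end
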